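(* Consider the E-FAS wiretap model described in the context, with a fixed power-splitting policy $P_s=(1-\theta_a)P$, $P_a=\theta_a P$, where $\theta_a\in[0,1)$ is fixed, and regard the ergodic secrecy rate $\bar R_s=\bar R_s(P)$ as a function of the total transmit power $P>0$. Then: (i) if $\theta_a=0$, then $\lim_{P\to\infty}\bar R_s(P)=0$; (ii) if $\theta_a\in(0,1)$, then $\lim_{P\to\infty}\bar R_s(P)$ exists, is finite, and equals $$\eta\,\mathbb{E}\Big[\big(\log_2(1+\gamma_b^\infty)-\log_2(1+\gamma_e^\infty)\big)^+\Big],$$ where $\gamma_b^\infty=\dfrac{(1-\theta_a)\|\hat{\mathbf h}_b\|^2}{(1-\theta_a)\mathbf w^H\tilde{\mathbf R}\mathbf w+\theta_a\operatorname{tr}(\mathbf V^H\tilde{\mathbf R}\mathbf V)}$ and $\gamma_e^\infty=\dfrac{(1-\theta_a)|X|^2}{\theta_a Y}$; moreover this limit is strictly positive. In particular, the high-power limit of the ergodic secrecy rate equals zero if and only if $\theta_a=0$.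
   Context: Let $M\ge 2$ be an integer. Fix constants $\sigma^2>0$, pilot length $\tau_p>0$, pilot power $\rho_p>0$, block length $T_c>\tau_p$, and set $\eta=1-\tau_p/T_c$. Let $\mathbf R_b,\mathbf R_e\in\mathbb C^{M\times M}$ be Hermitian positive definite matrices, let $\mathbf C\in\mathbb C^{M\times M}$ have spectral norm $\|\mathbf C\|\le 1$, let $\rho\in[0,1)$, and let $\beta_b>0$, $\beta_e>0$ be constants. Let $\mathbf g_b,\mathbf u\sim\mathcal{CN}(\mathbf 0,\mathbf I_M)$ and $\mathbf n_p\sim\mathcal{CN}(\mathbf 0,\sigma^2\mathbf I_M)$ be mutually independent. Define $\mathbf h_b=\sqrt{\beta_b}\,\mathbf R_b^{1/2}\mathbf g_b$, $\mathbf g_e=\rho\mathbf C\mathbf g_b+\sqrt{1-\rho^2}\,\mathbf u$, $\mathbf h_e=\sqrt{\beta_e}\,\mathbf R_e^{1/2}\mathbf g_e$, and the pilot observation $\mathbf y_p=\sqrt{\tau_p\rho_p}\,\mathbf h_b+\mathbf n_p$. With $\mathbf R_{h}=\beta_b\mathbf R_b$, the MMSE estimate is $\hat{\mathbf h}_b=\sqrt{\tau_p\rho_p}\,\mathbf R_h(\tau_p\rho_p\mathbf R_h+\sigma^2\mathbf I_M)^{-1}\mathbf y_p$ and the error covariance is $\tilde{\mathbf R}=\mathbf R_h-\tau_p\rho_p\mathbf R_h(\tau_p\rho_p\mathbf R_h+\sigma^2\mathbf I_M)^{-1}\mathbf R_h$. Let $\mathbf w=\hat{\mathbf h}_b/\|\hat{\mathbf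 h}_b\|$ (well defined a.s.) and let $\mathbf V\in\mathbb C^{M\times(M-1)}$ be a matrix (measurable function of $\hat{\mathbf h}_b$) with orthonormal columns spanning the orthogonal complement of $\hat{\mathbf h}_b$, i.e. $\mathbf V^H\mathbf V=\mathbf I_{M-1}$, $\mathbf V^H\hat{\mathbf h}_b=\mathbf 0$. For powers $P_s,P_a\ge0$ with $P_s+P_a=P$, define $\gamma_b=\dfrac{P_s\|\hat{\mathbf h}_b\|^2}{P_s\mathbf w^H\tilde{\mathbf R}\mathbf w+P_a\operatorname{tr}(\mathbf V^H\tilde{\mathbf R}\mathbf V)+\sigma^2}$ and $\gamma_e=\dfrac{P_s|X|^2}{P_aY+\sigma^2}$, where $X=\mathbf h_e^H\mathbf w$ and $Y=\|\mathbf V^H\mathbf h_e\|^2$. The ergodic secrecy rate is $\bar R_s=\eta\,\mathbb E\big[(\log_2(1+\gamma_b)-\log_2(1+\gamma_e))^+\big]$, where $(x)^+=\max\{0,x\}$ and the expectation is over all randomness. *)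

theory Defs
  imports "HOL-Analysis.Analysis"
begin

definition cinner :: "complex^'n \<Rightarrow> complex^'n \<Rightarrow> complex" where
  "cinner x y = (\<Sum>i\<in>UNIV. cnj (x $ i) * y $ i)"

definition ctrans :: "complex^'n^'m \<Rightarrow> complex^'m^'n" where
  "ctrans A = (\<chi> i j. cnj (A $ j $ i))"

definition cmat_scale :: "complex \<Rightarrow> complex^'n^'m \<Rightarrow> complex^'n^'m" where
  "cmat_scale c A = (\<chi> i j. c * A $ i $ j)"

definition hermitian :: "complex^'n^'n \<Rightarrow> bool" where
  "hermitian A \<longleftrightarrow> ctrans A = A"

definition pos_def :: "complex^'n^'n \<Rightarrow> bool" where
  "pos_def A \<longleftrightarrow> hermitian A \<and> (\<forall>x. x \<noteq> 0 \<longrightarrow> Re (cinner x (A *v x)) > 0)"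

definition pos_semidef :: "complex^'n^'n \<Rightarrow> bool" where
  "pos_semidef A \<longleftrightarrow> hermitian A \<and> (\<forall>x. Re (cinner x (A *v x)) \<ge> 0)"

definition msqrt :: "complex^'n^'n \<Rightarrow> complex^'n^'n" where
  "msqrt A = (THE S. pos_semidef S \<and> S ** S = A)"

definition spec_norm :: "complex^'n^'m \<Rightarrow> real" where
  "spec_norm A = onorm (\<lambda>x. A *v x)"

text \<open>Density of CN(0, s I) on complex^'n (viewed as R^{2n} with Lebesgue measure).\<close>
definition cgauss_density :: "real \<Rightarrow> complex^'n \<Rightarrow> real" where
  "cgauss_density s z = exp (- (norm z)\<^sup>2 / s) / (pi * s) ^ CARD('n)"

definition CN :: "real \<Rightarrow> (complex^'n) measure" where
  "CN s = density lborel (\<lambda>z. ennreal (cgauss_density s z))"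

text \<open>Joint law of the mutually independent (g_b, u, n_p).\<close>
definition input_space :: "real \<Rightarrow> ((complex^'n) \<times> (complex^'n) \<times> (complex^'n)) measure" where
  "input_space sigma2 = CN 1 \<Otimes>\<^sub>M (CN 1 \<Otimes>\<^sub>M CN sigma2)"

definition h_b :: "real \<Rightarrow> complex^'n^'n \<Rightarrow> complex^'n \<Rightarrow> complex^'n" where
  "h_b bb Rb g = complex_of_real (sqrt bb) *s (msqrt Rb *v g)"

definition g_e :: "complex^'n^'n \<Rightarrow> real \<Rightarrow> complex^'n \<Rightarrow> complex^'n \<Rightarrow> complex^'n" where
  "g_e C rho g u = complex_of_real rho *s (C *v g) + complex_of_real (sqrt (1 - rho\<^sup>2)) *s u"

definition h_e :: "real \<Rightarrow> complex^'n^'n \<Rightarrow> complex^'n^'n \<Rightarrow> real \<Rightarrow> complex^'n \<Rightarrow> complex^'n \<Rightarrow> complex^'n" where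
  "h_e be Reve C rho g u = complex_of_real (sqrt be) *s (msqrt Reve *v g_e C rho g u)"

definition y_p :: "real \<Rightarrow> real \<Rightarrow> real \<Rightarrow> complex^'n^'n \<Rightarrow> complex^'n \<Rightarrow> complex^'n \<Rightarrow> complex^'n" where
  "y_p tp rp bb Rb g n = complex_of_real (sqrt (tp * rp)) *s h_b bb Rb g + n"

definition R_h :: "real \<Rightarrow> complex^'n^'n \<Rightarrow> complex^'n^'n" where
  "R_h bb Rb = cmat_scale (complex_of_real bb) Rb"

definition K_inv :: "real \<Rightarrow> real \<Rightarrow> real \<Rightarrow> real \<Rightarrow> complex^'n^'n \<Rightarrow> complex^'n^'n" where
  "K_inv sigma2 tp rp bb Rb =
     matrix_inv (cmat_scale (complex_of_real (tp * rp)) (R_h bb Rb) + cmat_scale (complex_of_real sigma2) (mat 1))"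

text \<open>MMSE estimate of h_b.\<close>
definition h_hat :: "real \<Rightarrow> real \<Rightarrow> real \<Rightarrow> real \<Rightarrow> complex^'n^'n \<Rightarrow> complex^'n \<Rightarrow> complex^'n \<Rightarrow> complex^'n" where
  "h_hat sigma2 tp rp bb Rb g n =
     complex_of_real (sqrt (tp * rp)) *s ((R_h bb Rb ** K_inv sigma2 tp rp bb Rb) *v y_p tp rp bb Rb g n)"

text \<open>Estimation error covariance.\<close>
definition R_tilde :: "real \<Rightarrow> real \<Rightarrow> real \<Rightarrow> real \<Rightarrow> complex^'n^'n \<Rightarrow> complex^'n^'n" where
  "R_tilde sigma2 tp rp bb Rb =
     R_h bb Rb - cmat_scale (complex_of_real (tp * rp)) (R_h bb Rb ** K_inv sigma2 tp rp bb Rb ** R_h bb Rb)"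

definition beam :: "complex^'n \<Rightarrow> complex^'n" where
  "beam h = complex_of_real (1 / norm h) *s h"

section \<open>SINRs (w^H R w and tr(V^H R V) are real for Hermitian R; Re just makes the type real)\<close>

definition gamma_b :: "real \<Rightarrow> complex^'n^'n \<Rightarrow> (complex^'n \<Rightarrow> complex^'k^'n) \<Rightarrow> real \<Rightarrow> real \<Rightarrow> complex^'n \<Rightarrow> real" where
  "gamma_b sigma2 Rt V Ps Pa hh =
     Ps * (norm hh)\<^sup>2 /
     (Ps * Re (cinner (beam hh) (Rt *v beam hh)) + Pa * Re (trace (ctrans (V hh) ** Rt ** V hh)) + sigma2)"

definition gamma_e :: "real \<Rightarrow> (complex^'n \<Rightarrow> complex^'k^'n) \<Rightarrow> real \<Rightarrow> real \<Rightarrow> complex^'n \<Rightarrow> complex^'n \<Rightarrow> real" where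
  "gamma_e sigma2 V Ps Pa hh he =
     Ps * (cmod (cinner he (beam hh)))\<^sup>2 / (Pa * (norm (ctrans (V hh) *v he))\<^sup>2 + sigma2)"

definition gamma_b_inf :: "complex^'n^'n \<Rightarrow> (complex^'n \<Rightarrow> complex^'k^'n) \<Rightarrow> real \<Rightarrow> complex^'n \<Rightarrow> real" where
  "gamma_b_inf Rt V theta hh =
     (1 - theta) * (norm hh)\<^sup>2 /
     ((1 - theta) * Re (cinner (beam hh) (Rt *v beam hh)) + theta * Re (trace (ctrans (V hh) ** Rt ** V hh)))"

definition gamma_e_inf :: "(complex^'n \<Rightarrow> complex^'k^'n) \<Rightarrow> real \<Rightarrow> complex^'n \<Rightarrow> complex^'n \<Rightarrow> real" where
  "gamma_e_inf V theta hh he =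
     (1 - theta) * (cmod (cinner he (beam hh)))\<^sup>2 / (theta * (norm (ctrans (V hh) *v he))\<^sup>2)"

definition esr_of ::
  "real \<Rightarrow> real \<Rightarrow> real \<Rightarrow> real \<Rightarrow> real \<Rightarrow> complex^'n^'n \<Rightarrow> complex^'n^'n \<Rightarrow> complex^'n^'n \<Rightarrow> real \<Rightarrow> real
   \<Rightarrow> (complex^'n \<Rightarrow> real) \<Rightarrow> (complex^'n \<Rightarrow> complex^'n \<Rightarrow> real) \<Rightarrow> ennreal" where
  "esr_of sigma2 tp rp Tc bb Rb Reve C rho be gb ge =
     ennreal (1 - tp / Tc) *
     (\<integral>\<^sup>+ \<omega>. ennreal (max 0
        (log 2 (1 + gb (h_hat sigma2 tp rp bb Rb (fst \<omega>) (snd (snd \<omega>))))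
         - log 2 (1 + ge (h_hat sigma2 tp rp bb Rb (fst \<omega>) (snd (snd \<omega>)))
                          (h_e be Reve C rho (fst \<omega>) (fst (snd \<omega>))))))
      \<partial>input_space sigma2)"

definition ergodic_secrecy_rate ::
  "real \<Rightarrow> real \<Rightarrow> real \<Rightarrow> real \<Rightarrow> real \<Rightarrow> complex^'n^'n \<Rightarrow> complex^'n^'n \<Rightarrow> complex^'n^'n \<Rightarrow> real \<Rightarrow> real
   \<Rightarrow> (complex^'n \<Rightarrow> complex^'k^'n) \<Rightarrow> real \<Rightarrow> real \<Rightarrow> ennreal" where
  "ergodic_secrecy_rate sigma2 tp rp Tc bb Rb Reve C rho be V Ps Pa =
     esr_of sigma2 tp rp Tc bb Rb Reve C rho be
       (gamma_b sigma2 (R_tilde sigma2 tp rp bb Rb) V Ps Pa)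
       (gamma_e sigma2 V Ps Pa)"

definition ergodic_secrecy_rate_inf ::
  "real \<Rightarrow> real \<Rightarrow> real \<Rightarrow> real \<Rightarrow> real \<Rightarrow> complex^'n^'n \<Rightarrow> complex^'n^'n \<Rightarrow> complex^'n^'n \<Rightarrow> real \<Rightarrow> real
   \<Rightarrow> (complex^'n \<Rightarrow> complex^'k^'n) \<Rightarrow> real \<Rightarrow> ennreal" where
  "ergodic_secrecy_rate_inf sigma2 tp rp Tc bb Rb Reve C rho be V theta =
     esr_of sigma2 tp rp Tc bb Rb Reve C rho be
       (gamma_b_inf (R_tilde sigma2 tp rp bb Rb) V theta)
       (gamma_e_inf V theta)"

end

theory Submission
  imports Defs "HOL-Probability.Probability"
begin

text \<open>
  For a fixed channel realisation both SINRs are of the form P a / (P d + sigma^2).  With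
  artificial noise (theta > 0) the denominators grow linearly in P as well, because the
  estimation error covariance R~ = sigma^2 R_h (tau rho R_h + sigma^2 I)^-1 is positive definite
  and Eve receives artificial noise through V, so both SINRs converge and so does the
  integrand.  Without artificial noise Eve's SINR grows linearly in P while Bob's stays below
  ||h_hat||^2 / c, where c > 0 bounds the quadratic form of R~ from below; hence the integrand
  vanishes for large P.  The bound ||h_hat||^2 / (c ln 2) is integrable, so dominated convergence
  gives both limits.  For the limit to be positive it suffices that for almost every (g_b, n_p)
  the limiting integrand is positive on an open set of u: near a u for which h_e is a column of
  V(h_hat), Eve's limiting SINR is 0 while Bob's is positive, and the Gaussian law charges
  every open set.  Genericity conditions (h_hat, X and Y nonzero) hold almost surely because they
  fail only on points and hyperplanes.
\<close>

lemma cinner_add_right: "cinner x (y + z) = cinner x y + cinner x z"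
  by (simp add: cinner_def distrib_left sum.distrib)

lemma cinner_add_left: "cinner (x + y) z = cinner x z + cinner y z"
  by (simp add: cinner_def distrib_right sum.distrib)

lemma cinner_diff_right: "cinner x (y - z) = cinner x y - cinner x z"
  by (simp add: cinner_def right_diff_distrib sum_subtractf)

lemma cinner_scale_right: "cinner x (c *s y) = c * cinner x y"
  by (simp add: cinner_def sum_distrib_left mult.left_commute)

lemma cinner_scale_left: "cinner (c *s x) y = cnj c * cinner x y"
  by (simp add: cinner_def sum_distrib_left mult.assoc)

lemma cinner_zero_right [simp]: "cinner x 0 = 0"
  by (simp add: cinner_def)

lemma cinner_zero_left [simp]: "cinner 0 x = 0"
  by (simp add: cinner_def)

lemma cinner_commute: "cinner y x = cnj (cinner x y)"
  by (simp add: cinner_def mult.commute)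

lemma cinner_sum_right: "cinner x (sum f A) = (\<Sum>a\<in>A. cinner x (f a))"
  by (induction A rule: infinite_finite_induct) (auto simp: cinner_add_right)

lemma Re_cinner: "Re (cinner x y) = inner x y"
  by (simp add: cinner_def inner_vec_def inner_complex_def Re_sum)

lemma cinner_self: "cinner x x = complex_of_real ((norm x)\<^sup>2)"
proof -
  have "cinner x x = (\<Sum>i\<in>UNIV. complex_of_real ((cmod (x $ i))\<^sup>2))"
    unfolding cinner_def by (intro sum.cong refl) (metis complex_norm_square of_real_power mult.commute)
  also have "\<dots> = complex_of_real (\<Sum>i\<in>UNIV. (cmod (x $ i))\<^sup>2)" by simp
  also have "(\<Sum>i\<in>UNIV. (cmod (x $ i))\<^sup>2) = (norm x)\<^sup>2"
    by (simp add: norm_vec_def L2_set_def sum_nonneg)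
  finally show ?thesis .
qed

lemma cinner_self_eq_0 [simp]: "cinner x x = 0 \<longleftrightarrow> x = 0"
  by (simp add: cinner_self)

lemma cinner_matrix_vector_mult: "cinner x (M *v y) = cinner (ctrans M *v x) y"
proof -
  have "cinner x (M *v y) = (\<Sum>i\<in>UNIV. \<Sum>j\<in>UNIV. cnj (x $ i) * (M $ i $ j * y $ j))"
    by (simp add: cinner_def matrix_vector_mult_def sum_distrib_left)
  also have "\<dots> = (\<Sum>j\<in>UNIV. \<Sum>i\<in>UNIV. cnj (x $ i) * (M $ i $ j * y $ j))"
    by (rule sum.swap)
  also have "\<dots> = cinner (ctrans M *v x) y"
    by (simp add: cinner_def matrix_vector_mult_def ctrans_def sum_distrib_right sum_distrib_left mult_ac)
  finally show ?thesis .
qed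

lemma ctrans_ctrans [simp]: "ctrans (ctrans A) = A"
  by (simp add: ctrans_def vec_eq_iff)

lemma cinner_matrix_vector_mult_left: "cinner (M *v x) y = cinner x (ctrans M *v y)"
  using cinner_matrix_vector_mult[of x "ctrans M" y] by simp

lemma ctrans_matrix_vector_mult_component: "(ctrans W *v x) $ k = cinner (column k W) x"
  by (simp add: ctrans_def matrix_vector_mult_def cinner_def column_def)

lemma cinner_column_self: "cinner (column k W) (column k W) = (ctrans W ** W) $ k $ k"
  by (simp add: ctrans_def matrix_matrix_mult_def cinner_def column_def)

lemma norm_vector_scalar_mult: "norm (c *s x) = cmod c * norm (x::complex^'n)"
proof -
  have "norm (c *s x) = L2_set (\<lambda>i. cmod c * cmod (x $ i)) UNIV"
    by (simp add: norm_vec_def norm_mult)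
  also have "\<dots> = cmod c * L2_set (\<lambda>i. cmod (x $ i)) UNIV"
    by (simp add: L2_set_right_distrib)
  finally show ?thesis by (simp add: norm_vec_def)
qed

lemma norm_normalize:
  fixes x :: "complex^'n"
  shows "x \<noteq> 0 \<Longrightarrow> norm (complex_of_real (1 / norm x) *s x) = 1"
  by (simp add: norm_vector_scalar_mult norm_divide)

lemma matrix_vector_mult_sum: "M *v (sum f A) = (\<Sum>a\<in>A. M *v f a)"
  for M :: "complex^'n^'m"
  by (induction A rule: infinite_finite_induct) (auto simp: matrix_vector_right_distrib)

lemma continuous_on_cinner [continuous_intros]:
  "continuous_on S f \<Longrightarrow> continuous_on S g \<Longrightarrow> continuous_on S (\<lambda>x. cinner (f x) (g x))"
  unfolding cinner_def by (intro continuous_intros continuous_on_component)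

lemma continuous_on_matrix_vector_mult [continuous_intros]:
  fixes f :: "'a::topological_space \<Rightarrow> complex^'n^'m" and g :: "'a \<Rightarrow> complex^'n"
  shows "continuous_on S f \<Longrightarrow> continuous_on S g \<Longrightarrow> continuous_on S (\<lambda>x. f x *v g x)"
  unfolding matrix_vector_mult_def
  by (intro continuous_on_vec_lambda continuous_intros continuous_on_component)

lemma hermitian_cinner: "hermitian A \<Longrightarrow> cinner x (A *v y) = cinner (A *v x) y"
  by (simp add: cinner_matrix_vector_mult hermitian_def)

lemma hermitian_quadratic_form_real:
  assumes "hermitian A"
  shows "cinner x (A *v x) = complex_of_real (Re (cinner x (A *v x)))"
proof -
  have "cinner x (A *v x) = cnj (cinner x (A *v x))"
    using hermitian_cinner[OF assms, of x x] cinner_commute[of x "A *v x"] by simp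
  then show ?thesis by (metis Reals_cnj_iff complex_is_Real_iff complex_eq_iff of_real_Re)
qed

lemma quadratic_form_scale:
  "Re (cinner (complex_of_real c *s x) (A *v (complex_of_real c *s x))) = c\<^sup>2 * Re (cinner x (A *v x))"
  by (simp add: vector_scalar_commute cinner_scale_left cinner_scale_right power2_eq_square)

lemma quadratic_form_coercive:
  fixes A :: "complex^'n^'n"
  assumes pos: "\<And>x. x \<noteq> 0 \<Longrightarrow> Re (cinner x (A *v x)) > 0"
  shows "\<exists>c>0. \<forall>x. c * (norm x)\<^sup>2 \<le> Re (cinner x (A *v x))"
proof -
  define q where "q x = Re (cinner x (A *v x))" for x
  have "continuous_on UNIV q"
    unfolding q_def by (intro continuous_intros)
  moreover have "sphere (0::complex^'n) 1 \<noteq> {}" by (simp add: sphere_eq_empty)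
  ultimately obtain x0 where x0: "x0 \<in> sphere 0 1" and min: "\<And>y. y \<in> sphere 0 1 \<Longrightarrow> q x0 \<le> q y"
    using continuous_attains_inf[OF compact_sphere _ continuous_on_subset[OF _ subset_UNIV]] by blast
  have "q x0 * (norm x)\<^sup>2 \<le> q x" for x
  proof (cases "x = 0")
    case True then show ?thesis by (simp add: q_def)
  next
    case False
    have "q x0 \<le> q (complex_of_real (1 / norm x) *s x)"
      using False norm_normalize[of x] by (intro min) simp
    also have "\<dots> = q x / (norm x)\<^sup>2"
      unfolding q_def quadratic_form_scale by (simp add: power_divide)
    finally show ?thesis using False by (simp add: field_simps)
  qed
  moreover have "q x0 > 0" unfolding q_def using x0 by (intro pos) auto
  ultimately show ?thesis unfolding q_def by blast
qed

lemma trace_sandwich_nonneg: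
  fixes A :: "complex^'n^'n" and W :: "complex^'k^'n"
  assumes "\<And>x. Re (cinner x (A *v x)) \<ge> 0"
  shows "Re (trace (ctrans W ** A ** W)) \<ge> 0"
proof -
  have "trace (ctrans W ** A ** W) = (\<Sum>j\<in>UNIV. cinner (column j W) (A *v column j W))"
    unfolding trace_def
    by (intro sum.cong refl) (simp add: matrix_matrix_mult_def ctrans_def cinner_def column_def
        matrix_vector_mult_def sum_distrib_left sum_distrib_right mult_ac; subst sum.swap; simp add: mult_ac)
  then show ?thesis by (simp add: Re_sum sum_nonneg assms)
qed

lemma invertible_if_kernel_trivial:
  fixes A :: "'a::field^'n^'n"
  assumes "\<And>x. A *v x = 0 \<Longrightarrow> x = 0"
  shows "invertible A"
  using assms matrix_left_invertible_ker invertible_left_inverse by blast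

lemma matrix_inv_right: "invertible A \<Longrightarrow> A ** matrix_inv A = mat 1"
  and matrix_inv_left: "invertible A \<Longrightarrow> matrix_inv A ** A = mat 1"
  for A :: "'a::field^'n^'n"
  unfolding invertible_def matrix_inv_def by (metis (mono_tags, lifting) someI_ex)+

lemma pos_def_kernel_trivial: "pos_def A \<Longrightarrow> A *v x = 0 \<Longrightarrow> x = 0"
  unfolding pos_def_def by force

section \<open>Spectral theorem and matrix square roots\<close>

definition orthonormal :: "(complex^'n) set \<Rightarrow> bool" where
  "orthonormal E \<longleftrightarrow> (\<forall>e\<in>E. cinner e e = 1) \<and> (\<forall>e\<in>E. \<forall>f\<in>E. e \<noteq> f \<longrightarrow> cinner e f = 0)"

definition spectral_matrix :: "(complex^'n) set \<Rightarrow> (complex^'n \<Rightarrow> complex) \<Rightarrow> complex^'n^'n" where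
  "spectral_matrix E c = (\<chi> i j. \<Sum>e\<in>E. c e * e $ i * cnj (e $ j))"

lemma cinner_orthonormal_sum:
  assumes "finite E" "orthonormal E" "f \<in> E"
  shows "cinner f (\<Sum>e\<in>E. c e *s e) = c f"
proof -
  have "cinner f (\<Sum>e\<in>E. c e *s e) = (\<Sum>e\<in>E. c e * cinner f e)"
    by (simp add: cinner_sum_right cinner_scale_right)
  also have "\<dots> = (\<Sum>e\<in>E. if e = f then c f else 0)"
    using assms(2,3) unfolding orthonormal_def by (intro sum.cong refl) auto
  also have "\<dots> = c f" using assms(1,3) by simp
  finally show ?thesis .
qed

lemma spectral_matrix_matrix_vector_mult:
  "spectral_matrix E c *v x = (\<Sum>e\<in>E. (c e * cinner e x) *s e)"
proof -
  have "(spectral_matrix E c *v x) $ i = (\<Sum>e\<in>E. (c e * cinner e x) * e $ i)" for i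
  proof -
    have "(spectral_matrix E c *v x) $ i = (\<Sum>j\<in>UNIV. \<Sum>e\<in>E. c e * e $ i * cnj (e $ j) * x $ j)"
      by (simp add: spectral_matrix_def matrix_vector_mult_def sum_distrib_right)
    also have "\<dots> = (\<Sum>e\<in>E. \<Sum>j\<in>UNIV. c e * e $ i * cnj (e $ j) * x $ j)"
      by (rule sum.swap)
    also have "\<dots> = (\<Sum>e\<in>E. (c e * cinner e x) * e $ i)"
      by (simp add: cinner_def sum_distrib_left sum_distrib_right mult_ac)
    finally show ?thesis .
  qed
  then show ?thesis by (simp add: vec_eq_iff sum_component)
qed

lemma spectral_matrix_eigenvector:
  assumes "finite E" "orthonormal E" "e \<in> E"
  shows "spectral_matrix E c *v e = c e *s e"
proof -
  have "spectral_matrix E c *v e = (\<Sum>f\<in>E. if f = e then c e *s e else 0)"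
    unfolding spectral_matrix_matrix_vector_mult
    using assms(2,3) unfolding orthonormal_def by (intro sum.cong refl) auto
  also have "\<dots> = c e *s e" using assms(1,3) by simp
  finally show ?thesis .
qed

lemma pos_semidef_spectral_matrix:
  assumes "\<And>e. e \<in> E \<Longrightarrow> l e \<ge> 0"
  shows "pos_semidef (spectral_matrix E (\<lambda>e. complex_of_real (l e)))"
proof -
  have "hermitian (spectral_matrix E (\<lambda>e. complex_of_real (l e)))"
    by (simp add: hermitian_def ctrans_def spectral_matrix_def vec_eq_iff mult_ac)
  moreover have "Re (cinner x (spectral_matrix E (\<lambda>e. complex_of_real (l e)) *v x)) \<ge> 0" for x
  proof -
    have "cinner x (spectral_matrix E (\<lambda>e. complex_of_real (l e)) *v x)
        = (\<Sum>e\<in>E. complex_of_real (l e) * (cinner e x * cnj (cinner e x)))"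
      unfolding spectral_matrix_matrix_vector_mult cinner_sum_right cinner_scale_right
      by (intro sum.cong refl) (simp add: cinner_commute[of x] mult_ac)
    then have "Re (cinner x (spectral_matrix E (\<lambda>e. complex_of_real (l e)) *v x))
        = (\<Sum>e\<in>E. l e * (cmod (cinner e x))\<^sup>2)"
      by (simp add: Re_sum complex_norm_square[symmetric] del: of_real_power)
    also have "\<dots> \<ge> 0" using assms by (intro sum_nonneg) simp
    finally show ?thesis .
  qed
  ultimately show ?thesis by (simp add: pos_semidef_def)
qed

lemma eq_spectral_matrix:
  assumes span: "\<forall>x. x = (\<Sum>e\<in>E. cinner e x *s e)" and eig: "\<And>e. e \<in> E \<Longrightarrow> T *v e = c e *s e"
  shows "T = spectral_matrix E c"
proof (subst matrix_eq, intro allI)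
  fix x
  have "T *v x = T *v (\<Sum>e\<in>E. cinner e x *s e)" using span by metis
  also have "\<dots> = (\<Sum>e\<in>E. (c e * cinner e x) *s e)"
    unfolding matrix_vector_mult_sum vector_scalar_commute
    using eig by (intro sum.cong refl) (simp add: mult_ac)
  finally show "T *v x = spectral_matrix E c *v x"
    by (simp add: spectral_matrix_matrix_vector_mult)
qed

lemma mult_cnj_eq_cmod_square: "z * cnj z = (complex_of_real (cmod z))\<^sup>2"
  and cnj_mult_eq_cmod_square: "cnj z * z = (complex_of_real (cmod z))\<^sup>2"
  using complex_norm_square[of z] by (simp_all add: mult.commute)

lemma norm_add_scale_orthogonal_square:
  assumes "cinner v y = 0"
  shows "(norm (v + t *s y))\<^sup>2 = (norm v)\<^sup>2 + (cmod t)\<^sup>2 * (norm y)\<^sup>2"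
proof -
  have "cinner y v = 0" using assms cinner_commute[of v y] by simp
  have "complex_of_real ((norm (v + t *s y))\<^sup>2) = cinner v v + cnj t * t * cinner y y"
    unfolding cinner_self[symmetric] using assms \<open>cinner y v = 0\<close>
    by (simp add: cinner_add_left cinner_add_right cinner_scale_left cinner_scale_right algebra_simps)
  also have "\<dots> = complex_of_real ((norm v)\<^sup>2 + (cmod t)\<^sup>2 * (norm y)\<^sup>2)"
    unfolding cnj_mult_eq_cmod_square by (simp add: cinner_self)
  finally show ?thesis by (simp only: of_real_eq_iff)
qed

lemma quadratic_form_add_scale:
  fixes A :: "complex^'n^'n"
  assumes h: "hermitian A"
  shows "Re (cinner (v + t *s y) (A *v (v + t *s y)))
           = Re (cinner v (A *v v)) + 2 * Re (t * cinner v (A *v y)) + (cmod t)\<^sup>2 * Re (cinner y (A *v y))"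
proof -
  have "cinner y (A *v v) = cnj (cinner v (A *v y))"
    using hermitian_cinner[OF h, of v y] cinner_commute[of y "A *v v"] by simp
  then have "cinner (v + t *s y) (A *v (v + t *s y))
      = cinner v (A *v v) + (t * cinner v (A *v y) + cnj (t * cinner v (A *v y)))
        + complex_of_real ((cmod t)\<^sup>2) * cinner y (A *v y)"
    by (simp add: matrix_vector_right_distrib vector_scalar_commute cinner_add_left cinner_add_right
        cinner_scale_left cinner_scale_right mult_cnj_eq_cmod_square cnj_mult_eq_cmod_square algebra_simps)
  then show ?thesis by (simp add: complex_add_cnj)
qed

text \<open>
  Perturbing the maximiser v of the Rayleigh quotient towards y changes the quadratic form by
  2 s |a|^2 + O(s^2) and the squared norm only by O(s^2); small s > 0 contradicts maximality.
\<close>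
lemma rayleigh_maximiser_orthogonal:
  fixes A :: "complex^'n^'n"
  assumes h: "hermitian A"
    and S_add: "\<And>y z. y \<in> S \<Longrightarrow> z \<in> S \<Longrightarrow> y + z \<in> S"
    and S_scale: "\<And>c y. y \<in> S \<Longrightarrow> c *s y \<in> S"
    and v: "v \<in> S" "norm v = 1"
    and max: "\<And>y. y \<in> S \<Longrightarrow> Re (cinner y (A *v y)) \<le> Re (cinner v (A *v v)) * (norm y)\<^sup>2"
    and y: "y \<in> S" "cinner v y = 0"
  shows "cinner y (A *v v) = 0"
proof (rule ccontr)
  define q where "q x = Re (cinner x (A *v x))" for x
  define a where "a = cinner y (A *v v)"
  assume "cinner y (A *v v) \<noteq> 0"
  then have a: "(cmod a)\<^sup>2 > 0" by (simp add: a_def)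
  have avy: "cinner v (A *v y) = cnj a"
    unfolding a_def using hermitian_cinner[OF h, of v y] cinner_commute[of y "A *v v"] by simp
  define D where "D = q v * (norm y)\<^sup>2 - q y"
  have perturb: "2 * s * (cmod a)\<^sup>2 \<le> s\<^sup>2 * (cmod a)\<^sup>2 * D" if "s > 0" for s
  proof -
    define t where "t = complex_of_real s * a"
    have "t * cinner v (A *v y) = complex_of_real s * (a * cnj a)"
      by (simp add: t_def avy mult.assoc)
    then have "Re (t * cinner v (A *v y)) = s * (cmod a)\<^sup>2"
      unfolding mult_cnj_eq_cmod_square by (simp flip: of_real_power of_real_mult)
    moreover have "(cmod t)\<^sup>2 = s\<^sup>2 * (cmod a)\<^sup>2"
      by (simp add: t_def norm_mult power_mult_distrib)
    moreover have "v + t *s y \<in> S" by (intro S_add S_scale v y)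
    ultimately show ?thesis
      using max[of "v + t *s y"] v(2)
      unfolding quadratic_form_add_scale[OF h] norm_add_scale_orthogonal_square[OF y(2)]
      by (simp add: q_def D_def algebra_simps)
  qed
  define s where "s = 1 / (\<bar>D\<bar> + 1)"
  have s: "s > 0" by (simp add: s_def add_pos_nonneg)
  have "s * D < 1"
  proof -
    have "s * D \<le> s * \<bar>D\<bar>" using s by (simp add: mult_left_mono)
    also have "\<dots> < 1" using s by (simp add: s_def field_simps)
    finally show ?thesis .
  qed
  moreover have "(s * (cmod a)\<^sup>2) * 2 \<le> (s * (cmod a)\<^sup>2) * (s * D)"
    using perturb[OF s] by (simp add: power2_eq_square algebra_simps)
  then have "2 \<le> s * D" using s a by (simp add: mult_le_cancel_left_pos)
  ultimately show False by simp
qed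

lemma rayleigh_maximiser_eigenvector:
  fixes A :: "complex^'n^'n"
  assumes h: "hermitian A"
    and S_add: "\<And>y z. y \<in> S \<Longrightarrow> z \<in> S \<Longrightarrow> y + z \<in> S"
    and S_scale: "\<And>c y. y \<in> S \<Longrightarrow> c *s y \<in> S"
    and S_A: "\<And>y. y \<in> S \<Longrightarrow> A *v y \<in> S"
    and v: "v \<in> S" "norm v = 1"
    and max: "\<And>y. y \<in> S \<Longrightarrow> Re (cinner y (A *v y)) \<le> Re (cinner v (A *v v)) * (norm y)\<^sup>2"
  shows "A *v v = complex_of_real (Re (cinner v (A *v v))) *s v"
proof -
  define l where "l = Re (cinner v (A *v v))"
  define z where "z = A *v v - complex_of_real l *s v"
  have "z = A *v v + (-1) *s (complex_of_real l *s v)"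
    by (simp add: z_def vector_sneg_minus1[symmetric])
  then have zS: "z \<in> S" by (simp only:) (intro S_add S_scale S_A v)
  have vv: "cinner v v = 1" using v(2) by (simp add: cinner_self)
  have vz: "cinner v z = 0"
    unfolding z_def l_def using vv hermitian_quadratic_form_real[OF h, of v]
    by (simp add: cinner_diff_right cinner_scale_right)
  have zv: "cinner z v = 0" using vz cinner_commute[of v z] by simp
  have "cinner z (A *v v) = cinner z z + complex_of_real l * cinner z v"
    by (simp add: z_def cinner_diff_right cinner_scale_right)
  then have "cinner z z = 0"
    using rayleigh_maximiser_orthogonal[OF h S_add S_scale v max zS vz] zv by simp
  then show ?thesis by (simp add: z_def l_def)
qed

lemma quadratic_form_attains_max:
  fixes A :: "complex^'n^'n"
  assumes S: "closed S" and S_scale: "\<And>c y. y \<in> S \<Longrightarrow> c *s y \<in> S" and r: "r \<in> S" "r \<noteq> 0"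
  shows "\<exists>v\<in>S. norm v = 1 \<and> (\<forall>y\<in>S. Re (cinner y (A *v y)) \<le> Re (cinner v (A *v v)) * (norm y)\<^sup>2)"
proof -
  define q where "q y = Re (cinner y (A *v y))" for y
  define K where "K = S \<inter> sphere 0 1"
  have "compact K" unfolding K_def using S by (intro closed_Int_compact compact_sphere)
  moreover have "complex_of_real (1 / norm r) *s r \<in> K"
    using r norm_normalize[of r] by (simp add: K_def S_scale)
  then have "K \<noteq> {}" by blast
  moreover have "continuous_on K q"
    unfolding q_def by (intro continuous_intros)
  ultimately obtain v where vK: "v \<in> K" and vmax: "\<And>y. y \<in> K \<Longrightarrow> q y \<le> q v"
    by (metis continuous_attains_sup)
  have "q y \<le> q v * (norm y)\<^sup>2" if "y \<in> S" for y
  proof (cases "y = 0")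
    case True then show ?thesis by (simp add: q_def)
  next
    case False
    have "q (complex_of_real (1 / norm y) *s y) \<le> q v"
      using False that norm_normalize[of y] by (intro vmax) (simp add: K_def S_scale)
    then show ?thesis
      using False unfolding q_def quadratic_form_scale by (simp add: power_divide field_simps)
  qed
  then show ?thesis using vK unfolding K_def q_def by auto
qed

lemma hermitian_eigenvector_orthogonal_ex:
  fixes A :: "complex^'n^'n"
  assumes h: "hermitian A" and fin: "finite E" and on: "orthonormal E"
    and eig: "\<forall>e\<in>E. A *v e = complex_of_real (lam e) *s e"
    and x: "x \<noteq> (\<Sum>e\<in>E. cinner e x *s e)"
  shows "\<exists>v l. cinner v v = 1 \<and> (\<forall>e\<in>E. cinner e v = 0) \<and> A *v v = complex_of_real l *s v"
proof -
  define S where "S = {y. \<forall>e\<in>E. cinner e y = 0}"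
  have S_add: "y + z \<in> S" if "y \<in> S" "z \<in> S" for y z
    using that by (simp add: S_def cinner_add_right)
  have S_scale: "c *s y \<in> S" if "y \<in> S" for y c
    using that by (simp add: S_def cinner_scale_right)
  have S_A: "A *v y \<in> S" if "y \<in> S" for y
    using that eig by (simp add: S_def hermitian_cinner[OF h] cinner_scale_left)
  have "S = (\<Inter>e\<in>E. {y. cinner e y = 0})" by (auto simp: S_def)
  moreover have "closed {y. cinner e y = 0}" for e
    by (intro closed_Collect_eq continuous_intros)
  ultimately have "closed S" by auto
  define r where "r = x - (\<Sum>e\<in>E. cinner e x *s e)"
  have "r \<in> S"
    unfolding S_def r_def using cinner_orthonormal_sum[OF fin on] by (auto simp: cinner_diff_right)
  moreover have "r \<noteq> 0" using x by (simp add: r_def)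
  ultimately obtain v where v: "v \<in> S" "norm v = 1"
    and max: "\<And>y. y \<in> S \<Longrightarrow> Re (cinner y (A *v y)) \<le> Re (cinner v (A *v v)) * (norm y)\<^sup>2"
    using quadratic_form_attains_max[OF \<open>closed S\<close> S_scale] by blast
  have "A *v v = complex_of_real (Re (cinner v (A *v v))) *s v"
    by (rule rayleigh_maximiser_eigenvector[OF h S_add S_scale S_A v max])
  moreover have "cinner v v = 1" using v(2) by (simp add: cinner_self)
  moreover have "\<forall>e\<in>E. cinner e v = 0" using v by (simp add: S_def)
  ultimately show ?thesis by blast
qed

lemma card_orthonormal_le:
  fixes E :: "(complex^'n) set"
  assumes "orthonormal E"
  shows "card E \<le> DIM(complex^'n)"
proof -
  have "pairwise orthogonal E"
    using assms unfolding pairwise_def orthogonal_def orthonormal_def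
    by (metis Re_cinner zero_complex.sel(1))
  moreover have "0 \<notin> E" using assms unfolding orthonormal_def by force
  ultimately have "independent E" by (rule pairwise_orthogonal_independent)
  then show ?thesis using independent_bound by blast
qed

lemma orthonormal_insert:
  assumes "orthonormal E" "cinner v v = 1" "\<forall>e\<in>E. cinner e v = 0"
  shows "orthonormal (insert v E)"
proof -
  have "\<forall>e\<in>E. cinner v e = 0" using assms(3) by (metis cinner_commute complex_cnj_zero)
  then show ?thesis using assms unfolding orthonormal_def by auto
qed

text \<open>A maximal orthonormal family of eigenvectors exists by the dimension bound; it spans by
  hermitian_eigenvector_orthogonal_ex.\<close>
lemma hermitian_spectral_decomposition:
  fixes A :: "complex^'n^'n"
  assumes h: "hermitian A"
  shows "\<exists>E lam. finite E \<and> orthonormal E \<and> (\<forall>e\<in>E. A *v e = complex_of_real (lam e) *s e)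
           \<and> (\<forall>x. x = (\<Sum>e\<in>E. cinner e x *s e))"
proof -
  define P where "P n \<longleftrightarrow> (\<exists>E lam. card E = n \<and> finite E \<and> orthonormal E
     \<and> (\<forall>e\<in>E. A *v e = complex_of_real (lam e) *s e))" for n
  have "P 0" unfolding P_def orthonormal_def by (rule exI[of _ "{}"]) simp
  moreover have "\<forall>n. P n \<longrightarrow> n \<le> DIM(complex^'n)"
    unfolding P_def using card_orthonormal_le by blast
  ultimately obtain n where Pn: "P n" and nmax: "\<And>m. P m \<Longrightarrow> m \<le> n"
    using Nat.ex_has_greatest_nat[of P 0 "DIM(complex^'n)"] by blast
  from Pn obtain E lam where E: "card E = n" "finite E" "orthonormal E"
     "\<forall>e\<in>E. A *v e = complex_of_real (lam e) *s e"
    unfolding P_def by blast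
  have "\<forall>x. x = (\<Sum>e\<in>E. cinner e x *s e)"
  proof (rule ccontr)
    assume "\<not> ?thesis"
    then obtain x where "x \<noteq> (\<Sum>e\<in>E. cinner e x *s e)" by blast
    then obtain v l where v: "cinner v v = 1" "\<forall>e\<in>E. cinner e v = 0" "A *v v = complex_of_real l *s v"
      using hermitian_eigenvector_orthogonal_ex[OF h E(2-4)] by blast
    have "v \<notin> E" using v by force
    have "P (Suc n)" unfolding P_def
    proof (intro exI conjI)
      show "card (insert v E) = Suc n" "finite (insert v E)" using E \<open>v \<notin> E\<close> by simp_all
      show "orthonormal (insert v E)" using E(3) v(1,2) by (rule orthonormal_insert)
      show "\<forall>e\<in>insert v E. A *v e = complex_of_real ((lam(v := l)) e) *s e"
        using E v \<open>v \<notin> E\<close> by auto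
    qed
    then show False using nmax by fastforce
  qed
  then show ?thesis using E by blast
qed

lemma pos_semidef_sqrt_on_eigenvector:
  fixes A T :: "complex^'n^'n"
  assumes T: "pos_semidef T" "T ** T = A" and e: "A *v e = complex_of_real l *s e" and l: "l > 0"
  shows "T *v e = complex_of_real (sqrt l) *s e"
proof -
  define y where "y = T *v e - complex_of_real (sqrt l) *s e"
  have sqrt_sq: "complex_of_real (sqrt l) * complex_of_real (sqrt l) = complex_of_real l"
    using l by (simp flip: of_real_mult)
  have "T *v y + complex_of_real (sqrt l) *s y = T *v (T *v e) - complex_of_real l *s e"
    by (simp add: y_def matrix_vector_mult_diff_distrib vector_scalar_commute vector_ssub_ldistrib
        vector_smult_assoc sqrt_sq)
  also have "\<dots> = 0" using T(2) e by (simp add: matrix_vector_mul_assoc)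
  finally have Ty: "T *v y + complex_of_real (sqrt l) *s y = 0" .
  have "0 = Re (cinner y (T *v y + complex_of_real (sqrt l) *s y))" by (simp add: Ty)
  also have "\<dots> = Re (cinner y (T *v y)) + sqrt l * (norm y)\<^sup>2"
    by (simp add: cinner_add_right cinner_scale_right cinner_self)
  finally have "0 = Re (cinner y (T *v y)) + sqrt l * (norm y)\<^sup>2" .
  moreover have "Re (cinner y (T *v y)) \<ge> 0" using T(1) by (simp add: pos_semidef_def)
  ultimately have "sqrt l * (norm y)\<^sup>2 \<le> 0" by linarith
  then have "y = 0" using l by (simp add: mult_le_0_iff)
  then show ?thesis by (simp add: y_def)
qed

lemma pos_def_sqrt_ex1:
  fixes A :: "complex^'n^'n"
  assumes pd: "pos_def A"
  shows "\<exists>!S. pos_semidef S \<and> S ** S = A"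
proof -
  obtain E lam where fin: "finite E" and on: "orthonormal E"
    and eig: "\<forall>e\<in>E. A *v e = complex_of_real (lam e) *s e"
    and span: "\<forall>x. x = (\<Sum>e\<in>E. cinner e x *s e)"
    using hermitian_spectral_decomposition[of A] pd by (auto simp: pos_def_def)
  have lam: "lam e > 0" if "e \<in> E" for e
  proof -
    have "cinner e e = 1" using on that by (simp add: orthonormal_def)
    moreover from this have "e \<noteq> 0" by auto
    then have "Re (cinner e (A *v e)) > 0" using pd by (simp add: pos_def_def)
    ultimately show ?thesis using eig that by (simp add: cinner_scale_right)
  qed
  define sq where "sq e = complex_of_real (sqrt (lam e))" for e
  define S where "S = spectral_matrix E sq"
  have Se: "S *v e = sq e *s e" if "e \<in> E" for e
    unfolding S_def using fin on that by (rule spectral_matrix_eigenvector)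
  have "pos_semidef S"
    unfolding S_def sq_def using lam by (intro pos_semidef_spectral_matrix) (simp add: less_imp_le)
  moreover have "S ** S = A"
  proof -
    have "S ** S = spectral_matrix E (\<lambda>e. complex_of_real (lam e))"
      using span
    proof (rule eq_spectral_matrix)
      fix e assume "e \<in> E"
      then have "sq e * sq e = complex_of_real (lam e)"
        using lam[of e] by (simp add: sq_def flip: of_real_mult)
      then show "(S ** S) *v e = complex_of_real (lam e) *s e"
        using Se \<open>e \<in> E\<close> by (simp add: matrix_vector_mul_assoc[symmetric] vector_scalar_commute)
    qed
    also have "\<dots> = A"
      using span eig by (intro eq_spectral_matrix[symmetric]) auto
    finally show ?thesis .
  qed
  moreover have "T = S" if "pos_semidef T" "T ** T = A" for T
  proof -
    have "T = spectral_matrix E sq"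
      using span
    proof (rule eq_spectral_matrix)
      show "T *v e = sq e *s e" if "e \<in> E" for e
        unfolding sq_def using \<open>pos_semidef T\<close> \<open>T ** T = A\<close> eig lam that
        by (intro pos_semidef_sqrt_on_eigenvector) auto
    qed
    then show ?thesis by (simp add: S_def)
  qed
  ultimately show ?thesis by blast
qed

lemma pos_semidef_msqrt: "pos_def A \<Longrightarrow> pos_semidef (msqrt A)"
  and msqrt_mult_self: "pos_def A \<Longrightarrow> msqrt A ** msqrt A = A"
  unfolding msqrt_def using theI'[OF pos_def_sqrt_ex1] by blast+

lemma ctrans_msqrt: "pos_def A \<Longrightarrow> ctrans (msqrt A) = msqrt A"
  using pos_semidef_msqrt unfolding pos_semidef_def hermitian_def by blast

lemma msqrt_kernel_trivial:
  assumes "pos_def A" and "msqrt A *v x = 0"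
  shows "x = 0"
proof -
  have "A *v x = msqrt A *v (msqrt A *v x)"
    using msqrt_mult_self[OF assms(1)] by (simp add: matrix_vector_mul_assoc)
  then show ?thesis using assms pos_def_kernel_trivial by simp
qed

lemma surj_msqrt:
  assumes "pos_def A"
  shows "surj ((*v) (msqrt A))"
proof -
  have "invertible (msqrt A)"
    using msqrt_kernel_trivial[OF assms] by (rule invertible_if_kernel_trivial)
  then show ?thesis by (simp add: invertible_eq_bij bij_is_surj)
qed

section \<open>The estimation error covariance\<close>

lemma cmat_scale_matrix_vector_mult: "cmat_scale c A *v x = c *s (A *v x)"
  by (simp add: cmat_scale_def matrix_vector_mult_def vector_scalar_mult_def vec_eq_iff
      sum_distrib_left mult_ac)

locale mmse_estimator =
  fixes Rb :: "complex^'m^'m" and sigma2 tp rp bb :: real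
  assumes sigma2_pos: "sigma2 > 0" and tp_pos: "tp > 0" and rp_pos: "rp > 0"
    and pos_def_Rb: "pos_def Rb" and bb_pos: "bb > 0"
begin

abbreviation "Rh \<equiv> R_h bb Rb"
definition K :: "complex^'m^'m" where
  "K = cmat_scale (complex_of_real (tp * rp)) Rh + cmat_scale (complex_of_real sigma2) (mat 1)"

abbreviation "Ki \<equiv> K_inv sigma2 tp rp bb Rb"
abbreviation "Rt \<equiv> R_tilde sigma2 tp rp bb Rb"

lemma K_matrix_vector_mult: "K *v x = complex_of_real (tp * rp) *s (Rh *v x) + complex_of_real sigma2 *s x"
  by (simp add: K_def matrix_vector_mult_add_rdistrib cmat_scale_matrix_vector_mult)

lemma Rh_quadratic_form_pos: "x \<noteq> 0 \<Longrightarrow> Re (cinner x (Rh *v x)) > 0"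
  using pos_def_Rb bb_pos
  by (simp add: R_h_def cmat_scale_matrix_vector_mult cinner_scale_right pos_def_def)

lemma Rh_kernel_trivial: "Rh *v x = 0 \<Longrightarrow> x = 0"
  using Rh_quadratic_form_pos[of x] by auto

lemma K_kernel_trivial:
  assumes "K *v x = 0"
  shows "x = 0"
proof (rule ccontr)
  assume "x \<noteq> 0"
  have "Re (cinner x (K *v x)) = tp * rp * Re (cinner x (Rh *v x)) + sigma2 * (norm x)\<^sup>2"
    by (simp add: K_matrix_vector_mult cinner_add_right cinner_scale_right cinner_self)
  also have "\<dots> > 0"
    using Rh_quadratic_form_pos[OF \<open>x \<noteq> 0\<close>] tp_pos rp_pos sigma2_pos \<open>x \<noteq> 0\<close>
    by (intro add_pos_pos mult_pos_pos) auto
  finally show False using assms by simp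
qed

lemma K_Ki: "K *v (Ki *v x) = x" and Ki_K: "Ki *v (K *v x) = x"
  using invertible_if_kernel_trivial[OF K_kernel_trivial]
    matrix_inv_right[of K] matrix_inv_left[of K]
  by (simp_all add: K_inv_def K_def matrix_vector_mul_assoc)

lemma Ki_kernel_trivial: "Ki *v x = 0 \<Longrightarrow> x = 0"
  using K_Ki[of x] by simp

lemma Ki_Rh_commute: "Ki *v (Rh *v x) = Rh *v (Ki *v x)"
proof -
  have "K *v (Rh *v y) = Rh *v (K *v y)" for y
    by (simp add: K_matrix_vector_mult matrix_vector_right_distrib vector_scalar_commute)
  from this[of "Ki *v x"] show ?thesis
    by (metis K_Ki Ki_K)
qed

text \<open>K commutes with R_h, so R_h - tau rho R_h K^-1 R_h = R_h K^-1 (K - tau rho R_h) = sigma^2 R_h K^-1.\<close>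
lemma R_tilde_matrix_vector_mult: "Rt *v x = complex_of_real sigma2 *s (Rh *v (Ki *v x))"
proof -
  define y where "y = Ki *v x"
  have x: "x = K *v y" by (simp add: y_def K_Ki)
  have "Rt *v x = Rh *v x - complex_of_real (tp * rp) *s (Rh *v (Ki *v (Rh *v x)))"
    by (simp add: R_tilde_def matrix_vector_mult_diff_rdistrib cmat_scale_matrix_vector_mult
        matrix_vector_mul_assoc[symmetric])
  also have "Ki *v (Rh *v x) = Rh *v y" by (simp add: Ki_Rh_commute y_def)
  also have "Rh *v x = complex_of_real (tp * rp) *s (Rh *v (Rh *v y)) + complex_of_real sigma2 *s (Rh *v y)"
    by (simp add: x K_matrix_vector_mult matrix_vector_right_distrib vector_scalar_commute)
  finally show ?thesis by (simp add: y_def)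
qed

lemma R_tilde_quadratic_form_pos:
  assumes "x \<noteq> 0"
  shows "Re (cinner x (Rt *v x)) > 0"
proof -
  define y where "y = Ki *v x"
  have x: "x = K *v y" by (simp add: y_def K_Ki)
  have "y \<noteq> 0" using assms x by auto
  have "Re (cinner x (Rt *v x)) = sigma2 * Re (cinner (K *v y) (Rh *v y))"
    by (simp add: R_tilde_matrix_vector_mult cinner_scale_right y_def[symmetric] x[symmetric])
  also have "\<dots> = sigma2 * (tp * rp * (norm (Rh *v y))\<^sup>2 + sigma2 * Re (cinner y (Rh *v y)))"
    by (simp add: K_matrix_vector_mult cinner_add_left cinner_scale_left cinner_self)
  also have "\<dots> > 0"
    using Rh_quadratic_form_pos[OF \<open>y \<noteq> 0\<close>] sigma2_pos tp_pos rp_pos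
    by (simp add: add_nonneg_pos mult_pos_pos)
  finally show ?thesis .
qed

definition err_floor :: real where
  "err_floor = (SOME c. c > 0 \<and> (\<forall>x. c * (norm x)\<^sup>2 \<le> Re (cinner x (Rt *v x))))"

lemma err_floor_pos: "err_floor > 0"
  and err_floor_le: "err_floor * (norm x)\<^sup>2 \<le> Re (cinner x (Rt *v x))"
  using someI_ex[OF quadratic_form_coercive[OF R_tilde_quadratic_form_pos]]
  unfolding err_floor_def[symmetric] by auto

lemma R_tilde_quadratic_form_nonneg: "Re (cinner x (Rt *v x)) \<ge> 0"
  using R_tilde_quadratic_form_pos[of x] by (cases "x = 0") auto

lemma trace_R_tilde_nonneg: "Re (trace (ctrans W ** Rt ** W)) \<ge> 0"
  by (intro trace_sandwich_nonneg R_tilde_quadratic_form_nonneg)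

end

section \<open>The circularly symmetric complex Gaussian law\<close>

lemma nn_integral_exp_neg_square:
  fixes a :: real
  assumes a: "a > 0"
  shows "(\<integral>\<^sup>+x. ennreal (exp (- a * x\<^sup>2)) \<partial>lborel) = ennreal (sqrt (pi / a))"
proof -
  define s where "s = sqrt (1 / (2 * a))"
  have s2: "s\<^sup>2 = 1 / (2 * a)" using a by (simp add: s_def)
  have nd: "exp (- a * x\<^sup>2) = sqrt (pi / a) * normal_density 0 s x" for x
  proof -
    have "2 * pi * s\<^sup>2 = pi / a" using a by (simp add: s2)
    moreover have "- (x - 0)\<^sup>2 / (2 * s\<^sup>2) = - a * x\<^sup>2" using a by (simp add: s2)
    ultimately show ?thesis using a by (simp add: normal_density_def)
  qed
  have "(\<integral>\<^sup>+x. ennreal (exp (- a * x\<^sup>2)) \<partial>lborel)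
      = (\<integral>\<^sup>+x. ennreal (sqrt (pi / a)) * ennreal (normal_density 0 s x) \<partial>lborel)"
    unfolding nd by (intro nn_integral_cong ennreal_mult) (use a in \<open>simp_all add: normal_density_nonneg\<close>)
  also have "\<dots> = ennreal (sqrt (pi / a)) * (\<integral>\<^sup>+x. ennreal (normal_density 0 s x) \<partial>lborel)"
    by (rule nn_integral_cmult) simp
  also have "(\<integral>\<^sup>+x. ennreal (normal_density 0 s x) \<partial>lborel) = ennreal (\<integral>x. normal_density 0 s x \<partial>lborel)"
    using a by (intro nn_integral_eq_integral) (auto simp: s_def normal_density_nonneg)
  also have "(\<integral>x. normal_density 0 s x \<partial>lborel) = 1"
    using a integral_normal_density[of s 0] by (simp add: s_def)
  finally show ?thesis by simp
qed

lemma nn_integral_exp_neg_norm_square: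
  assumes a: "a > 0"
  shows "(\<integral>\<^sup>+z. ennreal (exp (- a * (norm (z::'a::euclidean_space))\<^sup>2)) \<partial>lborel)
          = ennreal (sqrt (pi / a) ^ DIM('a))"
proof -
  have "ennreal (exp (- a * (norm z)\<^sup>2)) = (\<Prod>b\<in>Basis. ennreal (exp (- a * (z \<bullet> b)\<^sup>2)))" for z :: 'a
  proof -
    have "(norm z)\<^sup>2 = (\<Sum>b\<in>Basis. (z \<bullet> b)\<^sup>2)"
      by (subst power2_norm_eq_inner, subst euclidean_inner) (simp add: power2_eq_square)
    then have "exp (- a * (norm z)\<^sup>2) = (\<Prod>b\<in>Basis. exp (- a * (z \<bullet> b)\<^sup>2))"
      by (simp add: sum_distrib_left exp_sum)
    then show ?thesis by (simp add: prod_ennreal)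
  qed
  then have "(\<integral>\<^sup>+z. ennreal (exp (- a * (norm (z::'a))\<^sup>2)) \<partial>lborel)
      = (\<integral>\<^sup>+z. (\<Prod>b\<in>Basis. (\<lambda>x. ennreal (exp (- a * x\<^sup>2))) ((z::'a) \<bullet> b)) \<partial>lborel)"
    by simp
  also have "\<dots> = (\<Prod>b\<in>(Basis::'a set). (\<integral>\<^sup>+x. ennreal (exp (- a * x\<^sup>2)) \<partial>lborel))"
    by (rule nn_integral_lborel_prod) auto
  also have "\<dots> = (\<Prod>b\<in>(Basis::'a set). ennreal (sqrt (pi / a)))"
    using nn_integral_exp_neg_square[OF a] by simp
  also have "\<dots> = ennreal (sqrt (pi / a) ^ DIM('a))"
    using a by (simp add: ennreal_power)
  finally show ?thesis .
qed

lemma borel_measurable_cgauss_density [measurable]: "cgauss_density s \<in> borel_measurable borel"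
  unfolding cgauss_density_def[abs_def] by measurable

lemma sets_CN [simp, measurable_cong]: "sets (CN s) = sets borel"
  by (simp add: CN_def)

lemma space_CN [simp]: "space (CN s) = UNIV"
  by (simp add: CN_def)

lemma prob_space_CN:
  assumes s: "s > 0"
  shows "prob_space (CN s :: (complex^'n) measure)"
proof
  have "emeasure (CN s :: (complex^'n) measure) (space (CN s))
      = (\<integral>\<^sup>+z. ennreal (1 / (pi * s) ^ CARD('n)) * ennreal (exp (- (1 / s) * (norm (z::complex^'n))\<^sup>2)) \<partial>lborel)"
    using s by (simp add: CN_def emeasure_density cgauss_density_def flip: ennreal_mult)
  also have "\<dots> = ennreal (1 / (pi * s) ^ CARD('n)) * (\<integral>\<^sup>+z. ennreal (exp (- (1 / s) * (norm (z::complex^'n))\<^sup>2)) \<partial>lborel)"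
    by (rule nn_integral_cmult) simp
  also have "(\<integral>\<^sup>+z. ennreal (exp (- (1 / s) * (norm (z::complex^'n))\<^sup>2)) \<partial>lborel)
      = ennreal (sqrt (pi / (1 / s)) ^ DIM(complex^'n))"
    by (rule nn_integral_exp_neg_norm_square) (use s in simp)
  also have "sqrt (pi / (1 / s)) ^ DIM(complex^'n) = (pi * s) ^ CARD('n)"
    using s by (simp add: DIM_cart power_mult_distrib[symmetric] power_mult[symmetric]
        mult.commute[of _ 2] power_mult)
  finally show "emeasure (CN s :: (complex^'n) measure) (space (CN s)) = 1"
    using s by (simp flip: ennreal_mult)
qed

lemma nn_integral_CN_norm_square_finite:
  assumes s: "s > 0"
  shows "(\<integral>\<^sup>+z. ennreal ((norm z)\<^sup>2) \<partial>(CN s :: (complex^'n) measure)) < \<infinity>"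
proof -
  define c where "c = 2 * s / (pi * s) ^ CARD('n)"
  have "(\<integral>\<^sup>+z. ennreal ((norm z)\<^sup>2) \<partial>(CN s :: (complex^'n) measure))
      = (\<integral>\<^sup>+z. ennreal (cgauss_density s (z::complex^'n)) * ennreal ((norm z)\<^sup>2) \<partial>lborel)"
    unfolding CN_def by (rule nn_integral_density) auto
  also have "\<dots> \<le> (\<integral>\<^sup>+z. ennreal c * ennreal (exp (- (1 / (2 * s)) * (norm (z::complex^'n))\<^sup>2)) \<partial>lborel)"
  proof (intro nn_integral_mono)
    fix z :: "complex^'n"
    define y where "y = (norm z)\<^sup>2 / (2 * s)"
    have "y \<le> exp y" using exp_ge_add_one_self[of y] by linarith
    have "exp (- (norm z)\<^sup>2 / s) * (norm z)\<^sup>2 = 2 * s * (exp (- y) * exp (- y) * y)"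
      using s by (simp add: y_def exp_add[symmetric])
    also have "\<dots> \<le> 2 * s * (exp (- y) * exp (- y) * exp y)"
      using s \<open>y \<le> exp y\<close> by (intro mult_left_mono) auto
    also have "\<dots> = 2 * s * exp (- y)" by (simp add: exp_minus field_simps)
    finally have "cgauss_density s z * (norm z)\<^sup>2 \<le> c * exp (- (1 / (2 * s)) * (norm z)\<^sup>2)"
      using s by (simp add: cgauss_density_def c_def y_def divide_right_mono field_simps)
    then show "ennreal (cgauss_density s z) * ennreal ((norm z)\<^sup>2)
        \<le> ennreal c * ennreal (exp (- (1 / (2 * s)) * (norm z)\<^sup>2))"
      using s by (simp add: c_def cgauss_density_def flip: ennreal_mult)
  qed
  also have "\<dots> = ennreal c * (\<integral>\<^sup>+z. ennreal (exp (- (1 / (2 * s)) * (norm (z::complex^'n))\<^sup>2)) \<partial>lborel)"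
    by (rule nn_integral_cmult) simp
  also have "(\<integral>\<^sup>+z. ennreal (exp (- (1 / (2 * s)) * (norm (z::complex^'n))\<^sup>2)) \<partial>lborel)
      = ennreal (sqrt (pi / (1 / (2 * s))) ^ DIM(complex^'n))"
    by (rule nn_integral_exp_neg_norm_square) (use s in simp)
  also have "ennreal c * ennreal (sqrt (pi / (1 / (2 * s))) ^ DIM(complex^'n)) < \<infinity>"
    by (simp add: ennreal_mult_less_top)
  finally show ?thesis .
qed

lemma AE_CN_if_AE_lborel: "(AE x in lborel. P x) \<Longrightarrow> AE x in CN s. P x"
  unfolding CN_def by (subst AE_density) (auto elim: AE_mp)

lemma CN_not_AE_notin_open:
  fixes A :: "(complex^'n) set"
  assumes s: "s > 0" and A: "open A" "c \<in> A"
  shows "\<not> (AE x in CN s. x \<notin> A)"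
proof
  assume "AE x in CN s. x \<notin> A"
  then have "AE x in lborel. 0 < ennreal (cgauss_density s x) \<longrightarrow> x \<notin> A"
    unfolding CN_def by (subst (asm) AE_density) auto
  moreover have "0 < cgauss_density s x" for x :: "complex^'n"
    using s by (simp add: cgauss_density_def)
  ultimately have "AE x in lborel. x \<notin> A"
    by (auto elim: AE_mp)
  obtain r where r: "r > 0" "ball c r \<subseteq> A" using A open_contains_ball by blast
  from \<open>AE x in lborel. x \<notin> A\<close> have "AE x in lborel. x \<notin> ball c r"
    by eventually_elim (use r in auto)
  then have "emeasure lborel (ball c r) = 0"
    by (subst (asm) AE_iff_measurable[of "ball c r"]) auto
  then have "Henstock_Kurzweil_Integration.content (ball c r) = 0" by (simp add: measure_def)
  then show False using content_ball_pos[OF r(1), of c] by simp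
qed

lemma AE_lborel_notin_negligible:
  fixes S :: "'a::euclidean_space set"
  assumes "negligible S" "S \<in> sets borel"
  shows "AE x in lborel. x \<notin> S"
  using assms by (intro AE_not_in) (simp add: negligible_iff_null_sets null_sets_completion_iff)

definition secrecy_gap :: "real \<Rightarrow> real \<Rightarrow> real" where
  "secrecy_gap x y = max 0 (log 2 (1 + x) - log 2 (1 + y))"

lemma secrecy_gap_nonneg: "secrecy_gap x y \<ge> 0"
  by (simp add: secrecy_gap_def)

lemma secrecy_gap_le:
  assumes "0 \<le> x" "0 \<le> y"
  shows "secrecy_gap x y \<le> x / ln 2"
proof -
  have "log 2 (1 + x) \<le> x / ln 2"
    using assms(1) by (simp add: log_def divide_right_mono ln_add_one_self_le_self)
  moreover have "log 2 (1 + y) \<ge> 0" using assms(2) by simp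
  ultimately show ?thesis using assms(1) by (simp add: secrecy_gap_def)
qed

lemma secrecy_gap_eq_0: "0 \<le> x \<Longrightarrow> x \<le> y \<Longrightarrow> secrecy_gap x y = 0"
  by (simp add: secrecy_gap_def)

lemma tendsto_secrecy_gap:
  assumes "(f \<longlongrightarrow> a) F" "(g \<longlongrightarrow> b) F" "0 \<le> a" "0 \<le> b"
  shows "((\<lambda>t. secrecy_gap (f t) (g t)) \<longlongrightarrow> secrecy_gap a b) F"
  unfolding secrecy_gap_def using assms by (intro tendsto_intros) auto

lemma tendsto_sinr_at_top:
  fixes a d s :: real
  assumes "d \<noteq> 0"
  shows "((\<lambda>P. P * a / (P * d + s)) \<longlongrightarrow> a / d) at_top"
proof -
  have "((\<lambda>P. a / (d + s / P)) \<longlongrightarrow> a / (d + 0)) at_top"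
    using assms by (intro tendsto_intros tendsto_divide_0[OF tendsto_const]
        filterlim_at_top_imp_at_infinity filterlim_ident) auto
  moreover have "\<forall>\<^sub>F P in at_top. a / (d + s / P) = P * a / (P * d + s)"
    using eventually_gt_at_top[of 0]
  proof eventually_elim
    fix P :: real assume "P > 0"
    then have "d + s / P = (P * d + s) / P" by (simp add: field_simps)
    then show "a / (d + s / P) = P * a / (P * d + s)" by (simp add: mult.commute)
  qed
  ultimately show ?thesis by (simp add: Lim_transform_eventually)
qed

lemma continuous_on_vector_scalar_mult [continuous_intros]:
  fixes f :: "'a::topological_space \<Rightarrow> complex^'n"
  shows "continuous_on S c \<Longrightarrow> continuous_on S f \<Longrightarrow> continuous_on S (\<lambda>x. c x *s f x)"
  unfolding vector_scalar_mult_def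
  by (intro continuous_on_vec_lambda continuous_intros continuous_on_component)

lemma continuous_on_ctrans [continuous_intros]:
  fixes f :: "'a::topological_space \<Rightarrow> complex^'n^'m"
  shows "continuous_on S f \<Longrightarrow> continuous_on S (\<lambda>x. ctrans (f x))"
  unfolding ctrans_def
  by (intro continuous_on_vec_lambda continuous_intros continuous_on_component)

lemma continuous_on_matrix_matrix_mult [continuous_intros]:
  fixes f :: "'a::topological_space \<Rightarrow> complex^'n^'m" and g :: "'a \<Rightarrow> complex^'k^'n"
  shows "continuous_on S f \<Longrightarrow> continuous_on S g \<Longrightarrow> continuous_on S (\<lambda>x. f x ** g x)"
  unfolding matrix_matrix_mult_def
  by (intro continuous_on_vec_lambda continuous_intros continuous_on_component)

lemma continuous_on_trace [continuous_intros]: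
  fixes f :: "'a::topological_space \<Rightarrow> complex^'n^'n"
  shows "continuous_on S f \<Longrightarrow> continuous_on S (\<lambda>x. trace (f x))"
  unfolding trace_def
  by (intro continuous_intros continuous_on_component)

lemma borel_measurable_cinner [measurable]:
  fixes f g :: "'a \<Rightarrow> complex^'n"
  assumes "f \<in> borel_measurable M" "g \<in> borel_measurable M"
  shows "(\<lambda>x. cinner (f x) (g x)) \<in> borel_measurable M"
  by (rule borel_measurable_continuous_Pair[OF assms])
     (intro continuous_intros continuous_on_fst continuous_on_snd continuous_on_id)

lemma borel_measurable_ctrans_matrix_vector_mult [measurable]:
  fixes f :: "'a \<Rightarrow> complex^'k^'n" and g :: "'a \<Rightarrow> complex^'n"
  assumes "f \<in> borel_measurable M" "g \<in> borel_measurable M"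
  shows "(\<lambda>x. ctrans (f x) *v g x) \<in> borel_measurable M"
  by (rule borel_measurable_continuous_Pair[OF assms])
     (intro continuous_intros continuous_on_fst continuous_on_snd continuous_on_id)

lemma borel_measurable_vector_scalar_mult [measurable]:
  fixes f :: "'a \<Rightarrow> complex^'n" and c :: "'a \<Rightarrow> complex"
  assumes "c \<in> borel_measurable M" "f \<in> borel_measurable M"
  shows "(\<lambda>x. c x *s f x) \<in> borel_measurable M"
  by (rule borel_measurable_continuous_Pair[OF assms])
     (intro continuous_intros continuous_on_fst continuous_on_snd continuous_on_id)

lemma borel_measurable_beam [measurable]:
  fixes f :: "'a \<Rightarrow> complex^'n"
  shows "f \<in> borel_measurable M \<Longrightarrow> (\<lambda>x. beam (f x)) \<in> borel_measurable M"
  unfolding beam_def by measurable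

lemma borel_measurable_quadratic_form [measurable]:
  fixes f :: "'a \<Rightarrow> complex^'n" and R :: "complex^'n^'n"
  shows "f \<in> borel_measurable M \<Longrightarrow> (\<lambda>x. Re (cinner (f x) (R *v f x))) \<in> borel_measurable M"
  by (rule borel_measurable_continuous_on[where f="\<lambda>v. Re (cinner v (R *v v))"])
     (intro continuous_intros)

lemma borel_measurable_trace_sandwich [measurable]:
  fixes f :: "'a \<Rightarrow> complex^'k^'n" and R :: "complex^'n^'n"
  shows "f \<in> borel_measurable M \<Longrightarrow> (\<lambda>x. Re (trace (ctrans (f x) ** R ** f x))) \<in> borel_measurable M"
  by (rule borel_measurable_continuous_on[where f="\<lambda>v. Re (trace (ctrans v ** R ** v))"])
     (intro continuous_intros continuous_on_id)

lemma borel_measurable_h_hat [measurable]: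
  "f \<in> borel_measurable M \<Longrightarrow> g \<in> borel_measurable M
    \<Longrightarrow> (\<lambda>x. h_hat sigma2 tp rp bb Rb (f x) (g x)) \<in> borel_measurable M"
  by (rule borel_measurable_continuous_Pair) (auto simp: h_hat_def y_p_def h_b_def
      intro!: continuous_intros continuous_on_fst continuous_on_snd continuous_on_id)

lemma borel_measurable_h_e [measurable]:
  "f \<in> borel_measurable M \<Longrightarrow> g \<in> borel_measurable M
    \<Longrightarrow> (\<lambda>x. h_e be Reve C rho (f x) (g x)) \<in> borel_measurable M"
  by (rule borel_measurable_continuous_Pair) (auto simp: h_e_def g_e_def
      intro!: continuous_intros continuous_on_fst continuous_on_snd continuous_on_id)

lemma borel_measurable_gamma_b [measurable]:
  assumes [measurable]: "V \<in> borel_measurable borel" "f \<in> borel_measurable M"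
  shows "(\<lambda>x. gamma_b s2 Rt V Ps Pa (f x)) \<in> borel_measurable M"
  unfolding gamma_b_def by measurable

lemma borel_measurable_gamma_e [measurable]:
  assumes [measurable]: "V \<in> borel_measurable borel" "f \<in> borel_measurable M" "g \<in> borel_measurable M"
  shows "(\<lambda>x. gamma_e s2 V Ps Pa (f x) (g x)) \<in> borel_measurable M"
  unfolding gamma_e_def by measurable

lemma borel_measurable_gamma_b_inf [measurable]:
  assumes [measurable]: "V \<in> borel_measurable borel" "f \<in> borel_measurable M"
  shows "(\<lambda>x. gamma_b_inf Rt V th (f x)) \<in> borel_measurable M"
  unfolding gamma_b_inf_def by measurable

lemma borel_measurable_gamma_e_inf [measurable]:
  assumes [measurable]: "V \<in> borel_measurable borel" "f \<in> borel_measurable M" "g \<in> borel_measurable M"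
  shows "(\<lambda>x. gamma_e_inf V th (f x) (g x)) \<in> borel_measurable M"
  unfolding gamma_e_inf_def by measurable

lemma borel_measurable_secrecy_gap [measurable]:
  assumes [measurable]: "f \<in> borel_measurable M" "g \<in> borel_measurable M"
  shows "(\<lambda>x. secrecy_gap (f x) (g x)) \<in> borel_measurable M"
  unfolding secrecy_gap_def by measurable

section \<open>The wiretap model\<close>

lemma norm_beam: "h \<noteq> 0 \<Longrightarrow> norm (beam h) = 1"
  unfolding beam_def by (rule norm_normalize)

lemma gamma_e_nonneg: "0 \<le> Ps \<Longrightarrow> 0 \<le> Pa \<Longrightarrow> 0 \<le> s \<Longrightarrow> 0 \<le> gamma_e s V Ps Pa h he"
  by (simp add: gamma_e_def)

lemma measurable_input_space_g [measurable]: "fst \<in> borel_measurable (input_space s)"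
  unfolding input_space_def by measurable

lemma measurable_input_space_u [measurable]: "(\<lambda>\<omega>. fst (snd \<omega>)) \<in> borel_measurable (input_space s)"
  unfolding input_space_def by measurable

lemma measurable_input_space_n [measurable]: "(\<lambda>\<omega>. snd (snd \<omega>)) \<in> borel_measurable (input_space s)"
  unfolding input_space_def by measurable

lemma nn_integral_fst_prob_space:
  assumes "prob_space N" "f \<in> borel_measurable M"
  shows "(\<integral>\<^sup>+\<omega>. f (fst \<omega>) \<partial>(M \<Otimes>\<^sub>M N)) = (\<integral>\<^sup>+x. f x \<partial>M)"
proof -
  interpret N: prob_space N by (fact assms(1))
  have "(\<integral>\<^sup>+\<omega>. f (fst \<omega>) \<partial>(M \<Otimes>\<^sub>M N)) = (\<integral>\<^sup>+x. \<integral>\<^sup>+y. f (fst (x, y)) \<partial>N \<partial>M)"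
    by (rule N.nn_integral_fst[symmetric]) (rule measurable_compose[OF measurable_fst assms(2)])
  then show ?thesis by (simp add: N.emeasure_space_1)
qed

lemma nn_integral_snd_prob_space:
  assumes "prob_space M" "prob_space N" "f \<in> borel_measurable N"
  shows "(\<integral>\<^sup>+\<omega>. f (snd \<omega>) \<partial>(M \<Otimes>\<^sub>M N)) = (\<integral>\<^sup>+y. f y \<partial>N)"
proof -
  interpret M: prob_space M by (fact assms(1))
  interpret N: prob_space N by (fact assms(2))
  have "(\<integral>\<^sup>+\<omega>. f (snd \<omega>) \<partial>(M \<Otimes>\<^sub>M N)) = (\<integral>\<^sup>+x. \<integral>\<^sup>+y. f (snd (x, y)) \<partial>N \<partial>M)"
    by (rule N.nn_integral_fst[symmetric]) (rule measurable_compose[OF measurable_snd assms(3)])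
  then show ?thesis by (simp add: M.emeasure_space_1)
qed

locale wiretap = mmse_estimator Rb sigma2 tp rp bb for Rb :: "complex^'m^'m" and sigma2 tp rp bb +
  fixes Reve C :: "complex^'m^'m" and V :: "complex^'m \<Rightarrow> complex^'k^'m" and rho be :: real
  assumes pos_def_Reve: "pos_def Reve" and rho_nonneg: "0 \<le> rho" and rho_less_1: "rho < 1"
    and be_pos: "be > 0"
    and V_measurable [measurable]: "V \<in> borel_measurable borel"
    and V_orthonormal: "\<forall>h. h \<noteq> 0 \<longrightarrow> ctrans (V h) ** V h = mat 1 \<and> ctrans (V h) *v h = 0"
begin

abbreviation G1 :: "(complex^'m) measure" where "G1 \<equiv> CN 1"
abbreviation Gn :: "(complex^'m) measure" where "Gn \<equiv> CN sigma2"
abbreviation Gun :: "((complex^'m) \<times> (complex^'m)) measure" where "Gun \<equiv> G1 \<Otimes>\<^sub>M Gn"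
abbreviation Omega :: "((complex^'m) \<times> (complex^'m) \<times> (complex^'m)) measure"
  where "Omega \<equiv> input_space sigma2"

lemma Omega_eq: "Omega = G1 \<Otimes>\<^sub>M Gun"
  by (simp add: input_space_def)

lemma prob_space_G1: "prob_space G1"
  by (rule prob_space_CN) simp

lemma prob_space_Gn: "prob_space Gn"
  by (rule prob_space_CN) (rule sigma2_pos)

lemma prob_space_Gun: "prob_space Gun"
  by (intro prob_space_pair prob_space_G1 prob_space_Gn)

lemma pair_sigma_finite_G1_Gn: "pair_sigma_finite G1 Gn"
  by (simp add: pair_sigma_finite_def prob_space_imp_sigma_finite prob_space_G1 prob_space_Gn)

lemma pair_sigma_finite_G1_Gun: "pair_sigma_finite G1 Gun"
  by (simp add: pair_sigma_finite_def prob_space_imp_sigma_finite prob_space_G1 prob_space_Gun)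

definition hhat :: "(complex^'m) \<times> (complex^'m) \<times> (complex^'m) \<Rightarrow> complex^'m" where
  "hhat \<omega> = h_hat sigma2 tp rp bb Rb (fst \<omega>) (snd (snd \<omega>))"

definition heve :: "(complex^'m) \<times> (complex^'m) \<times> (complex^'m) \<Rightarrow> complex^'m" where
  "heve \<omega> = h_e be Reve C rho (fst \<omega>) (fst (snd \<omega>))"

lemma borel_measurable_hhat [measurable]: "hhat \<in> borel_measurable Omega"
  unfolding hhat_def[abs_def] by measurable

lemma borel_measurable_heve [measurable]: "heve \<in> borel_measurable Omega"
  unfolding heve_def[abs_def] by measurable

lemma measurable_Pair_Omega [measurable]: "Pair g \<in> Gun \<rightarrow>\<^sub>M Omega"
  unfolding Omega_eq by measurable


lemma norm_hhat_le: "\<exists>K1 K2. \<forall>\<omega>. norm (hhat \<omega>) \<le> K1 * norm (fst \<omega>) + K2 * norm (snd (snd \<omega>))"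
proof -
  obtain B1 where B1: "B1 > 0" "\<And>x. norm ((Rh ** Ki) *v x) \<le> norm x * B1"
    using bounded_linear.pos_bounded[OF matrix_vector_mul_bounded_linear] by blast
  obtain B2 where B2: "B2 > 0" "\<And>x. norm (msqrt Rb *v x) \<le> norm x * B2"
    using bounded_linear.pos_bounded[OF matrix_vector_mul_bounded_linear] by blast
  define c where "c = sqrt (tp * rp)"
  have c: "c \<ge> 0" using tp_pos rp_pos by (simp add: c_def)
  have "norm (hhat \<omega>) \<le> (c * B1 * (c * sqrt bb * B2)) * norm (fst \<omega>) + (c * B1) * norm (snd (snd \<omega>))"
    for \<omega>
  proof -
    define g where "g = fst \<omega>"
    define n where "n = snd (snd \<omega>)"
    define y where "y = complex_of_real c *s (complex_of_real (sqrt bb) *s (msqrt Rb *v g)) + n"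
    have "norm y \<le> norm (complex_of_real c *s (complex_of_real (sqrt bb) *s (msqrt Rb *v g))) + norm n"
      unfolding y_def by (rule norm_triangle_ineq)
    also have "\<dots> = c * sqrt bb * norm (msqrt Rb *v g) + norm n"
      using c bb_pos by (simp add: norm_vector_scalar_mult norm_mult)
    also have "\<dots> \<le> c * sqrt bb * (norm g * B2) + norm n"
      using B2 c bb_pos by (intro add_right_mono mult_left_mono) auto
    finally have "c * norm ((Rh ** Ki) *v y) \<le> c * ((c * sqrt bb * (norm g * B2) + norm n) * B1)"
      using B1 c by (intro mult_left_mono order_trans[OF B1(2)] mult_right_mono) auto
    moreover have "norm (hhat \<omega>) = c * norm ((Rh ** Ki) *v y)"
      using tp_pos rp_pos
      by (simp add: hhat_def h_hat_def y_p_def h_b_def norm_vector_scalar_mult c_def g_def n_def y_def)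
    ultimately show ?thesis by (simp add: g_def n_def algebra_simps)
  qed
  then show ?thesis by blast
qed

lemma norm_hhat_square_le:
  "\<exists>B\<ge>0. \<forall>\<omega>. (norm (hhat \<omega>))\<^sup>2 \<le> B * ((norm (fst \<omega>))\<^sup>2 + (norm (snd (snd \<omega>)))\<^sup>2)"
proof -
  obtain K1 K2 where K: "\<And>\<omega>. norm (hhat \<omega>) \<le> K1 * norm (fst \<omega>) + K2 * norm (snd (snd \<omega>))"
    using norm_hhat_le by blast
  have "(norm (hhat \<omega>))\<^sup>2 \<le> (2 * K1\<^sup>2 + 2 * K2\<^sup>2) * ((norm (fst \<omega>))\<^sup>2 + (norm (snd (snd \<omega>)))\<^sup>2)" for \<omega>
  proof -
    have "(norm (hhat \<omega>))\<^sup>2 \<le> (K1 * norm (fst \<omega>) + K2 * norm (snd (snd \<omega>)))\<^sup>2"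
      using K[of \<omega>] by (intro power_mono) auto
    also have "\<dots> \<le> 2 * (K1 * norm (fst \<omega>))\<^sup>2 + 2 * (K2 * norm (snd (snd \<omega>)))\<^sup>2"
      by (smt (verit) sum_squares_bound power2_sum)
    also have "\<dots> \<le> (2 * K1\<^sup>2 + 2 * K2\<^sup>2) * ((norm (fst \<omega>))\<^sup>2 + (norm (snd (snd \<omega>)))\<^sup>2)"
      by (simp add: power_mult_distrib algebra_simps)
    finally show ?thesis .
  qed
  then show ?thesis by (metis add_nonneg_nonneg mult_nonneg_nonneg zero_le_numeral zero_le_power2)
qed

lemma integrable_norm_hhat_square: "integrable Omega (\<lambda>\<omega>. (norm (hhat \<omega>))\<^sup>2)"
proof (rule integrableI_bounded)
  show "(\<lambda>\<omega>. (norm (hhat \<omega>))\<^sup>2) \<in> borel_measurable Omega" by measurable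
  obtain B where B: "B \<ge> 0" "\<And>\<omega>. (norm (hhat \<omega>))\<^sup>2 \<le> B * ((norm (fst \<omega>))\<^sup>2 + (norm (snd (snd \<omega>)))\<^sup>2)"
    using norm_hhat_square_le by blast
  have "(\<integral>\<^sup>+\<omega>. ennreal ((norm (fst \<omega>))\<^sup>2) \<partial>Omega) = (\<integral>\<^sup>+g. ennreal ((norm g)\<^sup>2) \<partial>G1)"
    unfolding Omega_eq by (rule nn_integral_fst_prob_space[OF prob_space_Gun]) measurable
  also have "\<dots> < \<infinity>" by (rule nn_integral_CN_norm_square_finite) simp
  finally have g: "(\<integral>\<^sup>+\<omega>. ennreal ((norm (fst \<omega>))\<^sup>2) \<partial>Omega) < \<infinity>" .
  have "(\<integral>\<^sup>+\<omega>. ennreal ((norm (snd (snd \<omega>)))\<^sup>2) \<partial>Omega) = (\<integral>\<^sup>+p. ennreal ((norm (snd p))\<^sup>2) \<partial>Gun)"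
    unfolding Omega_eq by (rule nn_integral_snd_prob_space[OF prob_space_G1 prob_space_Gun]) measurable
  also have "\<dots> = (\<integral>\<^sup>+n. ennreal ((norm n)\<^sup>2) \<partial>Gn)"
    by (rule nn_integral_snd_prob_space[OF prob_space_G1 prob_space_Gn]) measurable
  also have "\<dots> < \<infinity>" by (rule nn_integral_CN_norm_square_finite) (rule sigma2_pos)
  finally have n: "(\<integral>\<^sup>+\<omega>. ennreal ((norm (snd (snd \<omega>)))\<^sup>2) \<partial>Omega) < \<infinity>" .
  have "(\<integral>\<^sup>+\<omega>. ennreal (norm ((norm (hhat \<omega>))\<^sup>2)) \<partial>Omega)
      \<le> (\<integral>\<^sup>+\<omega>. ennreal B * (ennreal ((norm (fst \<omega>))\<^sup>2) + ennreal ((norm (snd (snd \<omega>)))\<^sup>2)) \<partial>Omega)"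
    using B by (intro nn_integral_mono) (simp flip: ennreal_mult ennreal_plus del: ennreal_plus)
  also have "\<dots> = ennreal B * ((\<integral>\<^sup>+\<omega>. ennreal ((norm (fst \<omega>))\<^sup>2) \<partial>Omega)
                               + (\<integral>\<^sup>+\<omega>. ennreal ((norm (snd (snd \<omega>)))\<^sup>2) \<partial>Omega))"
    by (subst nn_integral_cmult) (auto simp: nn_integral_add)
  also have "\<dots> < \<infinity>" using g n by (simp add: ennreal_mult_less_top)
  finally show "(\<integral>\<^sup>+\<omega>. ennreal (norm ((norm (hhat \<omega>))\<^sup>2)) \<partial>Omega) < \<infinity>" .
qed


definition err_beam :: "complex^'m \<Rightarrow> real" where
  "err_beam h = Re (cinner (beam h) (Rt *v beam h))"

definition err_an :: "complex^'m \<Rightarrow> real" where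
  "err_an h = Re (trace (ctrans (V h) ** Rt ** V h))"

lemma err_beam_ge: "h \<noteq> 0 \<Longrightarrow> err_floor \<le> err_beam h"
  using err_floor_le[of "beam h"] by (simp add: err_beam_def norm_beam)

lemma err_an_nonneg: "err_an h \<ge> 0"
  unfolding err_an_def by (rule trace_R_tilde_nonneg)

lemma gamma_b_le:
  assumes "0 \<le> Ps" "0 \<le> Pa"
  shows "gamma_b sigma2 Rt V Ps Pa h \<le> (norm h)\<^sup>2 / err_floor"
proof (cases "h = 0 \<or> Ps = 0")
  case True then show ?thesis using err_floor_pos by (auto simp: gamma_b_def)
next
  case False
  then have "Ps * err_beam h > 0"
    using assms err_beam_ge[of h] err_floor_pos by (simp add: order_less_le_trans)
  moreover have "Pa * err_an h + sigma2 \<ge> 0"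
    using assms err_an_nonneg sigma2_pos by simp
  ultimately have "gamma_b sigma2 Rt V Ps Pa h \<le> Ps * (norm h)\<^sup>2 / (Ps * err_beam h)"
    unfolding gamma_b_def err_beam_def[symmetric] err_an_def[symmetric]
    using assms by (intro divide_left_mono) auto
  also have "\<dots> \<le> (norm h)\<^sup>2 / err_floor"
    using False err_beam_ge[of h] err_floor_pos by (simp add: frac_le)
  finally show ?thesis .
qed

lemma gamma_b_nonneg: "0 \<le> Ps \<Longrightarrow> 0 \<le> Pa \<Longrightarrow> 0 \<le> gamma_b sigma2 Rt V Ps Pa h"
  using R_tilde_quadratic_form_nonneg[of "beam h"] trace_R_tilde_nonneg[of "V h"] sigma2_pos
  by (simp add: gamma_b_def add_nonneg_pos)

lemma sinr_denominator_pos: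
  assumes "h \<noteq> 0" "0 \<le> th" "th < 1"
  shows "(1 - th) * err_beam h + th * err_an h > 0"
proof -
  have "err_beam h > 0"
    using err_beam_ge[OF assms(1)] err_floor_pos by simp
  then show ?thesis
    using err_an_nonneg[of h] assms(2,3) by (intro add_pos_nonneg) auto
qed

definition rate_gap :: "real \<Rightarrow> real \<Rightarrow> (complex^'m) \<times> (complex^'m) \<times> (complex^'m) \<Rightarrow> real" where
  "rate_gap th P \<omega> = secrecy_gap (gamma_b sigma2 Rt V ((1 - th) * P) (th * P) (hhat \<omega>))
                                 (gamma_e sigma2 V ((1 - th) * P) (th * P) (hhat \<omega>) (heve \<omega>))"

definition rate_gap_inf :: "real \<Rightarrow> (complex^'m) \<times> (complex^'m) \<times> (complex^'m) \<Rightarrow> real" where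
  "rate_gap_inf th \<omega> = secrecy_gap (gamma_b_inf Rt V th (hhat \<omega>)) (gamma_e_inf V th (hhat \<omega>) (heve \<omega>))"

lemma rate_gap_nonneg: "rate_gap th P \<omega> \<ge> 0"
  by (simp add: rate_gap_def secrecy_gap_nonneg)

lemma rate_gap_inf_nonneg: "rate_gap_inf th \<omega> \<ge> 0"
  by (simp add: rate_gap_inf_def secrecy_gap_nonneg)

lemma borel_measurable_rate_gap [measurable]: "rate_gap th P \<in> borel_measurable Omega"
  unfolding rate_gap_def[abs_def] by measurable

lemma borel_measurable_rate_gap_inf [measurable]: "rate_gap_inf th \<in> borel_measurable Omega"
  unfolding rate_gap_inf_def[abs_def] by measurable

lemma rate_gap_le:
  assumes "0 \<le> th" "th \<le> 1" "0 \<le> P"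
  shows "rate_gap th P \<omega> \<le> (norm (hhat \<omega>))\<^sup>2 / (err_floor * ln 2)"
proof -
  have "rate_gap th P \<omega> \<le> gamma_b sigma2 Rt V ((1 - th) * P) (th * P) (hhat \<omega>) / ln 2"
    unfolding rate_gap_def using assms sigma2_pos
    by (intro secrecy_gap_le gamma_b_nonneg gamma_e_nonneg) auto
  also have "\<dots> \<le> (norm (hhat \<omega>))\<^sup>2 / err_floor / ln 2"
    using assms by (intro divide_right_mono gamma_b_le) auto
  finally show ?thesis by simp
qed

definition generic :: "(complex^'m) \<times> (complex^'m) \<times> (complex^'m) \<Rightarrow> bool" where
  "generic \<omega> \<longleftrightarrow> hhat \<omega> \<noteq> 0 \<and> cinner (heve \<omega>) (beam (hhat \<omega>)) \<noteq> 0
                  \<and> ctrans (V (hhat \<omega>)) *v heve \<omega> \<noteq> 0"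

lemma measurable_generic [measurable]: "Measurable.pred Omega generic"
  unfolding generic_def[abs_def] by measurable

lemma tendsto_rate_gap:
  assumes "generic \<omega>" "0 < th" "th < 1"
  shows "((\<lambda>P. rate_gap th P \<omega>) \<longlongrightarrow> rate_gap_inf th \<omega>) at_top"
proof -
  define h where "h = hhat \<omega>"
  define X2 where "X2 = (cmod (cinner (heve \<omega>) (beam h)))\<^sup>2"
  define Y where "Y = (norm (ctrans (V h) *v heve \<omega>))\<^sup>2"
  define D where "D = (1 - th) * err_beam h + th * err_an h"
  have "h \<noteq> 0" "Y > 0" using assms(1) by (auto simp: generic_def h_def Y_def)
  then have "D > 0" using sinr_denominator_pos assms(2,3) by (simp add: D_def)
  have "(\<lambda>P. gamma_b sigma2 Rt V ((1 - th) * P) (th * P) h)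
      = (\<lambda>P. P * ((1 - th) * (norm h)\<^sup>2) / (P * D + sigma2))"
    by (simp add: fun_eq_iff gamma_b_def D_def err_beam_def err_an_def algebra_simps)
  moreover have "gamma_b_inf Rt V th h = (1 - th) * (norm h)\<^sup>2 / D"
    by (simp add: gamma_b_inf_def D_def err_beam_def err_an_def)
  ultimately have b: "((\<lambda>P. gamma_b sigma2 Rt V ((1 - th) * P) (th * P) h) \<longlongrightarrow> gamma_b_inf Rt V th h) at_top"
    using \<open>D > 0\<close> by (simp add: tendsto_sinr_at_top)
  have "(\<lambda>P. gamma_e sigma2 V ((1 - th) * P) (th * P) h (heve \<omega>))
      = (\<lambda>P. P * ((1 - th) * X2) / (P * (th * Y) + sigma2))"
    by (simp add: fun_eq_iff gamma_e_def X2_def Y_def algebra_simps)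
  moreover have "gamma_e_inf V th h (heve \<omega>) = (1 - th) * X2 / (th * Y)"
    by (simp add: gamma_e_inf_def X2_def Y_def)
  ultimately have e: "((\<lambda>P. gamma_e sigma2 V ((1 - th) * P) (th * P) h (heve \<omega>))
      \<longlongrightarrow> gamma_e_inf V th h (heve \<omega>)) at_top"
    using \<open>Y > 0\<close> assms(2) by (simp add: tendsto_sinr_at_top)
  have "gamma_b_inf Rt V th h \<ge> 0" "gamma_e_inf V th h (heve \<omega>) \<ge> 0"
    using \<open>D > 0\<close> assms(2,3) by (simp_all add: gamma_b_inf_def gamma_e_inf_def D_def err_beam_def err_an_def)
  with b e show ?thesis
    unfolding rate_gap_def rate_gap_inf_def h_def[symmetric] by (rule tendsto_secrecy_gap)
qed

text \<open>Without artificial noise, Eve's SINR grows linearly in P while Bob's stays bounded.\<close>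
lemma rate_gap_eventually_0:
  assumes "generic \<omega>"
  shows "\<forall>\<^sub>F P in at_top. rate_gap 0 P \<omega> = 0"
proof -
  define B where "B = (norm (hhat \<omega>))\<^sup>2 / err_floor"
  define X2 where "X2 = (cmod (cinner (heve \<omega>) (beam (hhat \<omega>))))\<^sup>2"
  have "X2 > 0" using assms by (simp add: generic_def X2_def)
  show ?thesis
    using eventually_ge_at_top[of "max 0 (sigma2 * B / X2)"]
  proof eventually_elim
    fix P assume P: "max 0 (sigma2 * B / X2) \<le> P"
    then have "sigma2 * B \<le> P * X2" using \<open>X2 > 0\<close> by (simp add: pos_divide_le_eq)
    then have "B \<le> P * X2 / sigma2" using sigma2_pos by (simp add: pos_le_divide_eq mult.commute)
    have "gamma_b sigma2 Rt V ((1 - 0) * P) (0 * P) (hhat \<omega>) \<le> B"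
      unfolding B_def using P by (intro gamma_b_le) auto
    also have "\<dots> \<le> gamma_e sigma2 V ((1 - 0) * P) (0 * P) (hhat \<omega>) (heve \<omega>)"
      using \<open>B \<le> P * X2 / sigma2\<close> by (simp add: gamma_e_def X2_def)
    finally show "rate_gap 0 P \<omega> = 0"
      unfolding rate_gap_def using P by (intro secrecy_gap_eq_0 gamma_b_nonneg) auto
  qed
qed


lemma h_hat_eq_0_iff:
  "h_hat sigma2 tp rp bb Rb g n = 0 \<longleftrightarrow> n = - (complex_of_real (sqrt (tp * rp)) *s h_b bb Rb g)"
proof -
  define y where "y = y_p tp rp bb Rb g n"
  have "h_hat sigma2 tp rp bb Rb g n = complex_of_real (sqrt (tp * rp)) *s (Rh *v (Ki *v y))"
    by (simp add: h_hat_def y_def matrix_vector_mul_assoc)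
  moreover have "complex_of_real (sqrt (tp * rp)) \<noteq> 0" using tp_pos rp_pos by simp
  ultimately have "h_hat sigma2 tp rp bb Rb g n = 0 \<longleftrightarrow> Rh *v (Ki *v y) = 0"
    by (simp add: vector_mul_eq_0)
  also have "\<dots> \<longleftrightarrow> y = 0"
    using Rh_kernel_trivial[of "Ki *v y"] Ki_kernel_trivial[of y] by auto
  also have "\<dots> \<longleftrightarrow> n = - (complex_of_real (sqrt (tp * rp)) *s h_b bb Rb g)"
    by (auto simp: y_def y_p_def add_eq_0_iff)
  finally show ?thesis .
qed

lemma AE_h_hat_nonzero: "AE n in lborel. h_hat sigma2 tp rp bb Rb g n \<noteq> 0"
proof -
  have "AE n in lborel. n \<notin> {- (complex_of_real (sqrt (tp * rp)) *s h_b bb Rb g)}"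
    by (rule AE_lborel_notin_negligible) (auto intro: negligible_sing)
  then show ?thesis by (auto simp: h_hat_eq_0_iff elim!: AE_mp)
qed

lemma h_e_eq: "h_e be Reve C rho g u =
   complex_of_real (sqrt be) *s (msqrt Reve *v (complex_of_real rho *s (C *v g))) +
   complex_of_real (sqrt be * sqrt (1 - rho\<^sup>2)) *s (msqrt Reve *v u)"
  by (simp add: h_e_def g_e_def matrix_vector_right_distrib vector_scalar_commute vector_add_ldistrib
      vector_smult_assoc)

lemma sqrt_one_minus_rho_square_pos: "sqrt (1 - rho\<^sup>2) > 0"
  using rho_nonneg rho_less_1 by (simp add: power2_less_1_iff)

text \<open>As a function of u, cinner z h_e is a nonconstant affine map, so its real part vanishes only
  on a hyperplane.\<close>
lemma AE_cinner_h_e_nonzero: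
  assumes "z \<noteq> 0"
  shows "AE u in lborel. cinner z (h_e be Reve C rho g u) \<noteq> 0"
proof -
  define a where "a = msqrt Reve *v z"
  have "a \<noteq> 0" using msqrt_kernel_trivial[OF pos_def_Reve] assms by (auto simp: a_def)
  define alpha where
    "alpha = cinner z (complex_of_real (sqrt be) *s (msqrt Reve *v (complex_of_real rho *s (C *v g))))"
  define k where "k = sqrt be * sqrt (1 - rho\<^sup>2)"
  have k: "k > 0" using be_pos sqrt_one_minus_rho_square_pos by (simp add: k_def)
  have "{u. cinner z (h_e be Reve C rho g u) = 0} \<subseteq> {u. a \<bullet> u = - Re alpha / k}"
  proof
    fix u assume "u \<in> {u. cinner z (h_e be Reve C rho g u) = 0}"
    moreover have "cinner z (h_e be Reve C rho g u) = alpha + complex_of_real k * cinner a u"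
      unfolding h_e_eq alpha_def a_def k_def
      by (simp add: cinner_add_right cinner_scale_right cinner_matrix_vector_mult ctrans_msqrt[OF pos_def_Reve])
    ultimately have "Re (alpha + complex_of_real k * cinner a u) = 0" by simp
    then have "Re alpha + k * (a \<bullet> u) = 0" by (simp add: Re_cinner[symmetric])
    then show "u \<in> {u. a \<bullet> u = - Re alpha / k}" using k by (simp add: field_simps)
  qed
  moreover have "AE u in lborel. u \<notin> {u. a \<bullet> u = - Re alpha / k}"
    using \<open>a \<noteq> 0\<close> negligible_hyperplane[of a "- Re alpha / k"]
    by (intro AE_lborel_notin_negligible) (auto intro: borel_closed closed_hyperplane)
  ultimately show ?thesis by (auto elim!: AE_mp)
qed

lemma AE_generic_slice:
  assumes "h_hat sigma2 tp rp bb Rb g n \<noteq> 0"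
  shows "AE u in G1. generic (g, u, n)"
proof -
  define h where "h = h_hat sigma2 tp rp bb Rb g n"
  have "h \<noteq> 0" using assms by (simp add: h_def)
  obtain k :: 'k where True by simp
  have "column k (V h) \<noteq> 0"
  proof
    assume "column k (V h) = 0"
    then have "cinner (column k (V h)) (column k (V h)) = 0" by simp
    then show False using V_orthonormal \<open>h \<noteq> 0\<close> by (simp add: cinner_column_self mat_def)
  qed
  have "beam h \<noteq> 0" using norm_beam[OF \<open>h \<noteq> 0\<close>] by auto
  have "AE u in lborel. cinner (beam h) (h_e be Reve C rho g u) \<noteq> 0
                     \<and> cinner (column k (V h)) (h_e be Reve C rho g u) \<noteq> 0"
    using AE_cinner_h_e_nonzero[OF \<open>beam h \<noteq> 0\<close>, of g]
      AE_cinner_h_e_nonzero[OF \<open>column k (V h) \<noteq> 0\<close>, of g]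
    by eventually_elim auto
  then have "AE u in G1. cinner (beam h) (h_e be Reve C rho g u) \<noteq> 0
               \<and> cinner (column k (V h)) (h_e be Reve C rho g u) \<noteq> 0"
    by (rule AE_CN_if_AE_lborel)
  then show ?thesis
  proof eventually_elim
    fix u
    assume u: "cinner (beam h) (h_e be Reve C rho g u) \<noteq> 0 \<and> cinner (column k (V h)) (h_e be Reve C rho g u) \<noteq> 0"
    then have "cinner (h_e be Reve C rho g u) (beam h) \<noteq> 0"
      using cinner_commute[of "h_e be Reve C rho g u" "beam h"] by auto
    moreover have "ctrans (V h) *v h_e be Reve C rho g u \<noteq> 0"
      using u ctrans_matrix_vector_mult_component[of "V h" "h_e be Reve C rho g u" k] by auto
    ultimately show "generic (g, u, n)"
      using \<open>h \<noteq> 0\<close> by (simp add: generic_def hhat_def heve_def h_def)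
  qed
qed

lemma AE_generic: "AE \<omega> in Omega. generic \<omega>"
proof -
  have "AE p in Gun. generic (g, p)" for g
  proof -
    have pred: "Measurable.pred Gun (\<lambda>p. generic (g, p))" by measurable
    have "AE n in Gn. h_hat sigma2 tp rp bb Rb g n \<noteq> 0"
      by (rule AE_CN_if_AE_lborel[OF AE_h_hat_nonzero])
    then have "AE n in Gn. AE u in G1. generic (g, u, n)"
      by eventually_elim (rule AE_generic_slice)
    then have "AE u in G1. AE n in Gn. generic (g, u, n)"
      by (subst pair_sigma_finite.AE_commute[OF pair_sigma_finite_G1_Gn]) (use pred in \<open>simp add: pred_def\<close>)
    then show ?thesis
      by (intro pair_sigma_finite.AE_pair_measure[OF pair_sigma_finite_G1_Gn]) (use pred in \<open>simp_all add: pred_def\<close>)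
  qed
  then show ?thesis unfolding Omega_eq
    by (intro pair_sigma_finite.AE_pair_measure[OF pair_sigma_finite_G1_Gun])
       (use measurable_generic in \<open>simp_all add: pred_def Omega_eq\<close>)
qed


lemma eventually_AE_rate_gap_le:
  assumes "0 \<le> th" "th \<le> 1"
  shows "\<forall>\<^sub>F P in at_top. AE \<omega> in Omega. norm (rate_gap th P \<omega>) \<le> (norm (hhat \<omega>))\<^sup>2 / (err_floor * ln 2)"
  using eventually_ge_at_top[of 0]
proof eventually_elim
  fix P :: real assume "0 \<le> P"
  then show "AE \<omega> in Omega. norm (rate_gap th P \<omega>) \<le> (norm (hhat \<omega>))\<^sup>2 / (err_floor * ln 2)"
    using rate_gap_le[OF assms] by (intro AE_I2) (simp add: rate_gap_nonneg)
qed

lemma integrable_majorant: "integrable Omega (\<lambda>\<omega>. (norm (hhat \<omega>))\<^sup>2 / (err_floor * ln 2))"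
  using integrable_norm_hhat_square by (rule integrable_divide)

lemma integrable_rate_gap:
  assumes "0 \<le> th" "th \<le> 1" "0 \<le> P"
  shows "integrable Omega (rate_gap th P)"
  using integrable_majorant
proof (rule Bochner_Integration.integrable_bound)
  show "AE \<omega> in Omega. norm (rate_gap th P \<omega>) \<le> norm ((norm (hhat \<omega>))\<^sup>2 / (err_floor * ln 2))"
    using rate_gap_le[OF assms] err_floor_pos by (intro AE_I2) (simp add: rate_gap_nonneg)
qed simp

lemma tendsto_integral_rate_gap:
  assumes "0 < th" "th < 1"
  shows "((\<lambda>P. \<integral>\<omega>. rate_gap th P \<omega> \<partial>Omega) \<longlongrightarrow> (\<integral>\<omega>. rate_gap_inf th \<omega> \<partial>Omega)) at_top"
    and "integrable Omega (rate_gap_inf th)"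
proof -
  have lim: "AE \<omega> in Omega. ((\<lambda>P. rate_gap th P \<omega>) \<longlongrightarrow> rate_gap_inf th \<omega>) at_top"
    using AE_generic by eventually_elim (rule tendsto_rate_gap[OF _ assms])
  note dominated = borel_measurable_rate_gap_inf borel_measurable_rate_gap integrable_majorant lim
    eventually_AE_rate_gap_le[of th]
  show "((\<lambda>P. \<integral>\<omega>. rate_gap th P \<omega> \<partial>Omega) \<longlongrightarrow> (\<integral>\<omega>. rate_gap_inf th \<omega> \<partial>Omega)) at_top"
    using assms by (intro integral_dominated_convergence_at_top[OF dominated]) auto
  show "integrable Omega (rate_gap_inf th)"
    using assms by (intro integrable_dominated_convergence_at_top[OF dominated]) auto
qed

lemma tendsto_integral_rate_gap_0: "((\<lambda>P. \<integral>\<omega>. rate_gap 0 P \<omega> \<partial>Omega) \<longlongrightarrow> 0) at_top"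
proof -
  have "AE \<omega> in Omega. ((\<lambda>P. rate_gap 0 P \<omega>) \<longlongrightarrow> 0) at_top"
    using AE_generic by eventually_elim (simp add: rate_gap_eventually_0 tendsto_eventually)
  then have "((\<lambda>P. \<integral>\<omega>. rate_gap 0 P \<omega> \<partial>Omega) \<longlongrightarrow> (\<integral>\<omega>. 0 \<partial>Omega)) at_top"
    by (intro integral_dominated_convergence_at_top[OF borel_measurable_const borel_measurable_rate_gap
        integrable_majorant] eventually_AE_rate_gap_le) auto
  then show ?thesis by simp
qed

lemma ergodic_secrecy_rate_eq_nn_integral:
  "ergodic_secrecy_rate sigma2 tp rp Tc bb Rb Reve C rho be V ((1 - th) * P) (th * P)
     = ennreal (1 - tp / Tc) * (\<integral>\<^sup>+\<omega>. ennreal (rate_gap th P \<omega>) \<partial>Omega)"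
  by (simp add: ergodic_secrecy_rate_def esr_of_def rate_gap_def secrecy_gap_def hhat_def heve_def)

lemma ergodic_secrecy_rate_inf_eq_nn_integral:
  "ergodic_secrecy_rate_inf sigma2 tp rp Tc bb Rb Reve C rho be V th
     = ennreal (1 - tp / Tc) * (\<integral>\<^sup>+\<omega>. ennreal (rate_gap_inf th \<omega>) \<partial>Omega)"
  by (simp add: ergodic_secrecy_rate_inf_def esr_of_def rate_gap_inf_def secrecy_gap_def hhat_def heve_def)

lemma ergodic_secrecy_rate_eq:
  assumes "Tc > tp" "0 \<le> th" "th \<le> 1" "0 \<le> P"
  shows "ergodic_secrecy_rate sigma2 tp rp Tc bb Rb Reve C rho be V ((1 - th) * P) (th * P)
           = ennreal ((1 - tp / Tc) * (\<integral>\<omega>. rate_gap th P \<omega> \<partial>Omega))"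
proof -
  have "(\<integral>\<^sup>+\<omega>. ennreal (rate_gap th P \<omega>) \<partial>Omega) = ennreal (\<integral>\<omega>. rate_gap th P \<omega> \<partial>Omega)"
    using integrable_rate_gap[OF assms(2-4)] by (intro nn_integral_eq_integral) (auto simp: rate_gap_nonneg)
  moreover have "(\<integral>\<omega>. rate_gap th P \<omega> \<partial>Omega) \<ge> 0"
    by (simp add: rate_gap_nonneg)
  moreover have "1 - tp / Tc \<ge> 0" using assms(1) tp_pos by simp
  ultimately show ?thesis
    unfolding ergodic_secrecy_rate_eq_nn_integral by (simp add: ennreal_mult)
qed

lemma ergodic_secrecy_rate_inf_eq:
  assumes "Tc > tp" "0 < th" "th < 1"
  shows "ergodic_secrecy_rate_inf sigma2 tp rp Tc bb Rb Reve C rho be V th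
           = ennreal ((1 - tp / Tc) * (\<integral>\<omega>. rate_gap_inf th \<omega> \<partial>Omega))"
proof -
  have "(\<integral>\<^sup>+\<omega>. ennreal (rate_gap_inf th \<omega>) \<partial>Omega) = ennreal (\<integral>\<omega>. rate_gap_inf th \<omega> \<partial>Omega)"
    using tendsto_integral_rate_gap(2)[OF assms(2,3)]
    by (intro nn_integral_eq_integral) (auto simp: rate_gap_inf_nonneg)
  moreover have "(\<integral>\<omega>. rate_gap_inf th \<omega> \<partial>Omega) \<ge> 0"
    by (simp add: rate_gap_inf_nonneg)
  moreover have "1 - tp / Tc \<ge> 0" using assms(1) tp_pos by simp
  ultimately show ?thesis
    unfolding ergodic_secrecy_rate_inf_eq_nn_integral by (simp add: ennreal_mult)
qed


lemma surj_h_e: "surj (h_e be Reve C rho g)"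
proof -
  have "\<exists>u. z = h_e be Reve C rho g u" for z
  proof -
    define c where "c = sqrt (1 - rho\<^sup>2)"
    have "c > 0" using sqrt_one_minus_rho_square_pos by (simp add: c_def)
    obtain v where v: "msqrt Reve *v v = complex_of_real (1 / sqrt be) *s z"
      using surj_msqrt[OF pos_def_Reve] by (metis surjD)
    define u where "u = complex_of_real (1 / c) *s (v - complex_of_real rho *s (C *v g))"
    have "g_e C rho g u = v"
      using \<open>c > 0\<close> by (simp add: g_e_def u_def c_def vector_smult_assoc)
    then have "h_e be Reve C rho g u = z"
      using be_pos by (simp add: h_e_def v vector_smult_assoc)
    then show ?thesis by metis
  qed
  then show ?thesis by (simp add: surj_def)
qed

lemma gamma_b_inf_pos:
  assumes "h \<noteq> 0" "0 < th" "th < 1"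
  shows "gamma_b_inf Rt V th h > 0"
  using sinr_denominator_pos[OF assms(1)] assms
  by (simp add: gamma_b_inf_def err_beam_def err_an_def)

lemma isCont_rate_gap_inf_slice:
  assumes "0 < th" "th < 1"
    and Y: "ctrans (V (h_hat sigma2 tp rp bb Rb g n)) *v h_e be Reve C rho g u0 \<noteq> 0"
  shows "isCont (\<lambda>u. rate_gap_inf th (g, u, n)) u0"
proof -
  define h where "h = h_hat sigma2 tp rp bb Rb g n"
  define X where "X u = cinner (h_e be Reve C rho g u) (beam h)" for u
  define Y where "Y u = (norm (ctrans (V h) *v h_e be Reve C rho g u))\<^sup>2" for u
  have "continuous_on UNIV X" "continuous_on UNIV Y"
    unfolding X_def Y_def h_e_def g_e_def by (intro continuous_intros)+
  then have "(X \<longlongrightarrow> X u0) (at u0)" "(Y \<longlongrightarrow> Y u0) (at u0)"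
    by (simp_all add: continuous_on_eq_continuous_at continuous_at)
  moreover have "Y u0 \<noteq> 0" using Y by (simp add: Y_def h_def)
  ultimately have "((\<lambda>u. (1 - th) * (cmod (X u))\<^sup>2 / (th * Y u))
      \<longlongrightarrow> (1 - th) * (cmod (X u0))\<^sup>2 / (th * Y u0)) (at u0)"
    using assms(1) by (intro tendsto_intros) auto
  then have "((\<lambda>u. gamma_e_inf V th h (h_e be Reve C rho g u))
      \<longlongrightarrow> gamma_e_inf V th h (h_e be Reve C rho g u0)) (at u0)"
    by (simp add: gamma_e_inf_def X_def Y_def)
  moreover have "gamma_e_inf V th h (h_e be Reve C rho g u0) \<ge> 0" "gamma_b_inf Rt V th h \<ge> 0"
    using R_tilde_quadratic_form_nonneg[of "beam h"] trace_R_tilde_nonneg[of "V h"] assms(1,2)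
    by (auto simp: gamma_e_inf_def gamma_b_inf_def
        intro!: divide_nonneg_nonneg mult_nonneg_nonneg add_nonneg_nonneg)
  ultimately have "((\<lambda>u. rate_gap_inf th (g, u, n)) \<longlongrightarrow> rate_gap_inf th (g, u0, n)) (at u0)"
    unfolding rate_gap_inf_def hhat_def heve_def fst_conv snd_conv h_def[symmetric]
    by (auto intro!: tendsto_secrecy_gap)
  then show ?thesis by (simp add: continuous_at)
qed

text \<open>Where Eve's channel is a column of V h, she receives artificial noise only
  (X = 0, Y = 1), so the limiting integrand is positive there and, by continuity, nearby.\<close>
lemma rate_gap_inf_pos_near:
  assumes th: "0 < th" "th < 1" and h: "h_hat sigma2 tp rp bb Rb g n \<noteq> 0"
  shows "\<exists>u0 r. r > 0 \<and> (\<forall>u \<in> ball u0 r. rate_gap_inf th (g, u, n) > 0)"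
proof -
  define h where "h = h_hat sigma2 tp rp bb Rb g n"
  have "h \<noteq> 0" using h by (simp add: h_def)
  then have V: "ctrans (V h) ** V h = mat 1" "ctrans (V h) *v h = 0" using V_orthonormal by auto
  obtain k :: 'k where True by simp
  obtain u0 where u0: "h_e be Reve C rho g u0 = V h *v axis k 1"
    using surj_h_e by (metis surjD)
  have Y: "ctrans (V h) *v h_e be Reve C rho g u0 = axis k 1"
    by (simp add: u0 matrix_vector_mul_assoc V)
  have "cinner (h_e be Reve C rho g u0) (beam h) = cinner (axis k 1) (ctrans (V h) *v beam h)"
    by (simp add: u0 cinner_matrix_vector_mult_left)
  also have "ctrans (V h) *v beam h = 0" by (simp add: beam_def vector_scalar_commute V)
  finally have "gamma_e_inf V th h (h_e be Reve C rho g u0) = 0"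
    by (simp add: gamma_e_inf_def)
  then have "rate_gap_inf th (g, u0, n) = secrecy_gap (gamma_b_inf Rt V th h) 0"
    by (simp add: rate_gap_inf_def hhat_def heve_def h_def)
  then have "rate_gap_inf th (g, u0, n) > 0"
    using gamma_b_inf_pos[OF \<open>h \<noteq> 0\<close> th] by (simp add: secrecy_gap_def)
  moreover have "isCont (\<lambda>u. rate_gap_inf th (g, u, n)) u0"
    using Y by (intro isCont_rate_gap_inf_slice th) (simp add: h_def)
  ultimately obtain r where "r > 0" and r: "\<forall>u. dist u0 u < r \<longrightarrow> rate_gap_inf th (g, u, n) \<noteq> 0"
    using continuous_at_avoid[of u0 "\<lambda>u. rate_gap_inf th (g, u, n)" 0] by auto
  have "rate_gap_inf th (g, u, n) > 0" if "u \<in> ball u0 r" for u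
  proof -
    have "rate_gap_inf th (g, u, n) \<noteq> 0" using r that by simp
    then show ?thesis using rate_gap_inf_nonneg[of th "(g, u, n)"] by linarith
  qed
  then show ?thesis using \<open>r > 0\<close> by blast
qed

lemma not_AE_rate_gap_inf_le_0:
  assumes "0 < th" "th < 1" "h_hat sigma2 tp rp bb Rb g n \<noteq> 0"
  shows "\<not> (AE u in G1. rate_gap_inf th (g, u, n) \<le> 0)"
proof
  obtain u0 r where "r > 0" and pos: "\<forall>u \<in> ball u0 r. rate_gap_inf th (g, u, n) > 0"
    using rate_gap_inf_pos_near[OF assms] by blast
  assume "AE u in G1. rate_gap_inf th (g, u, n) \<le> 0"
  then have "AE u in G1. u \<notin> ball u0 r" by eventually_elim (use pos in force)
  then show False using CN_not_AE_notin_open[of 1 "ball u0 r" u0] \<open>r > 0\<close> by simp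
qed

lemma nn_integral_rate_gap_inf_pos:
  assumes "0 < th" "th < 1"
  shows "(\<integral>\<^sup>+\<omega>. ennreal (rate_gap_inf th \<omega>) \<partial>Omega) > 0"
proof (rule ccontr)
  have pred: "Measurable.pred Gun (\<lambda>p. rate_gap_inf th (g, p) \<le> 0)" for g
    by measurable
  assume "\<not> ?thesis"
  then have "(\<integral>\<^sup>+\<omega>. ennreal (rate_gap_inf th \<omega>) \<partial>Omega) = 0" by simp
  then have "AE \<omega> in Omega. ennreal (rate_gap_inf th \<omega>) = 0"
    by (subst (asm) nn_integral_0_iff_AE) auto
  then have "AE \<omega> in G1 \<Otimes>\<^sub>M Gun. rate_gap_inf th \<omega> \<le> 0"
    unfolding Omega_eq by eventually_elim (simp add: ennreal_eq_0_iff)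
  then have "AE g in G1. AE p in Gun. rate_gap_inf th (g, p) \<le> 0"
    by (rule pair_sigma_finite.AE_pair[OF pair_sigma_finite_G1_Gun])
  then obtain g where g: "AE p in Gun. rate_gap_inf th (g, p) \<le> 0"
    using eventually_happens'[OF prob_space.ae_filter_bot[OF prob_space_G1]] by blast
  have "AE u in G1. AE n in Gn. rate_gap_inf th (g, u, n) \<le> 0"
    using pair_sigma_finite.AE_pair[OF pair_sigma_finite_G1_Gn g] by simp
  then have "AE n in Gn. AE u in G1. rate_gap_inf th (g, u, n) \<le> 0"
    by (subst (asm) pair_sigma_finite.AE_commute[OF pair_sigma_finite_G1_Gn]) (use pred in \<open>simp add: pred_def\<close>)
  moreover have "AE n in Gn. h_hat sigma2 tp rp bb Rb g n \<noteq> 0"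
    by (rule AE_CN_if_AE_lborel[OF AE_h_hat_nonzero])
  ultimately have "AE n in Gn. False"
    by eventually_elim (use not_AE_rate_gap_inf_le_0[OF assms] in blast)
  then show False using prob_space.AE_False[OF prob_space_Gn] by simp
qed

lemma ergodic_secrecy_rate_tendsto_0:
  assumes "Tc > tp"
  shows "((\<lambda>P. ergodic_secrecy_rate sigma2 tp rp Tc bb Rb Reve C rho be V ((1 - 0) * P) (0 * P)) \<longlongrightarrow> 0) at_top"
proof -
  have "((\<lambda>P. ennreal ((1 - tp / Tc) * (\<integral>\<omega>. rate_gap 0 P \<omega> \<partial>Omega))) \<longlongrightarrow> ennreal ((1 - tp / Tc) * 0)) at_top"
    by (intro tendsto_ennrealI tendsto_mult tendsto_const tendsto_integral_rate_gap_0)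
  moreover have "\<forall>\<^sub>F P in at_top. ennreal ((1 - tp / Tc) * (\<integral>\<omega>. rate_gap 0 P \<omega> \<partial>Omega))
      = ergodic_secrecy_rate sigma2 tp rp Tc bb Rb Reve C rho be V ((1 - 0) * P) (0 * P)"
    using eventually_ge_at_top[of 0]
    by eventually_elim (rule ergodic_secrecy_rate_eq[OF assms, symmetric], auto)
  ultimately show ?thesis by (simp add: Lim_transform_eventually)
qed

lemma ergodic_secrecy_rate_tendsto_inf:
  assumes "Tc > tp" "0 < th" "th < 1"
  shows "((\<lambda>P. ergodic_secrecy_rate sigma2 tp rp Tc bb Rb Reve C rho be V ((1 - th) * P) (th * P))
           \<longlongrightarrow> ergodic_secrecy_rate_inf sigma2 tp rp Tc bb Rb Reve C rho be V th) at_top"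
proof -
  have "((\<lambda>P. ennreal ((1 - tp / Tc) * (\<integral>\<omega>. rate_gap th P \<omega> \<partial>Omega)))
          \<longlongrightarrow> ennreal ((1 - tp / Tc) * (\<integral>\<omega>. rate_gap_inf th \<omega> \<partial>Omega))) at_top"
    by (intro tendsto_ennrealI tendsto_mult tendsto_const tendsto_integral_rate_gap assms(2,3))
  moreover have "\<forall>\<^sub>F P in at_top. ennreal ((1 - tp / Tc) * (\<integral>\<omega>. rate_gap th P \<omega> \<partial>Omega))
      = ergodic_secrecy_rate sigma2 tp rp Tc bb Rb Reve C rho be V ((1 - th) * P) (th * P)"
    using eventually_ge_at_top[of 0]
    by eventually_elim (rule ergodic_secrecy_rate_eq[OF assms(1), symmetric], use assms in auto)
  ultimately show ?thesis
    unfolding ergodic_secrecy_rate_inf_eq[OF assms] by (rule Lim_transform_eventually)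
qed

lemma ergodic_secrecy_rate_inf_finite_pos:
  assumes "Tc > tp" "0 < th" "th < 1"
  shows "ergodic_secrecy_rate_inf sigma2 tp rp Tc bb Rb Reve C rho be V th < \<infinity>"
    and "ergodic_secrecy_rate_inf sigma2 tp rp Tc bb Rb Reve C rho be V th > 0"
proof -
  show "ergodic_secrecy_rate_inf sigma2 tp rp Tc bb Rb Reve C rho be V th < \<infinity>"
    unfolding ergodic_secrecy_rate_inf_eq[OF assms] by simp
  have "1 - tp / Tc > 0" using assms(1) tp_pos by simp
  then show "ergodic_secrecy_rate_inf sigma2 tp rp Tc bb Rb Reve C rho be V th > 0"
    using nn_integral_rate_gap_inf_pos[OF assms(2,3)]
    by (simp add: ergodic_secrecy_rate_inf_eq_nn_integral ennreal_zero_less_mult_iff)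
qed

end

theorem proposition1:
  fixes Rb Reve C :: "complex^'m^'m"
    and V :: "complex^'m \<Rightarrow> complex^'k^'m"
    and sigma2 tp rp Tc rho bb be theta :: real
  assumes "CARD('m) \<ge> 2"
    and "CARD('k) + 1 = CARD('m)"
    and "sigma2 > 0" and "tp > 0" and "rp > 0" and "Tc > tp"
    and "pos_def Rb" and "pos_def Reve"
    and "spec_norm C \<le> 1"
    and "0 \<le> rho" and "rho < 1"
    and "bb > 0" and "be > 0"
    and "V \<in> borel_measurable borel"
    and "\<forall>h. h \<noteq> 0 \<longrightarrow> ctrans (V h) ** V h = mat 1 \<and> ctrans (V h) *v h = 0"
    and "0 \<le> theta" and "theta < 1"
  shows "(theta = 0 \<longrightarrow>
            ((\<lambda>P. ergodic_secrecy_rate sigma2 tp rp Tc bb Rb Reve C rho be V ((1 - theta) * P) (theta * P))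
              \<longlongrightarrow> 0) at_top)
       \<and> (0 < theta \<longrightarrow>
            ((\<lambda>P. ergodic_secrecy_rate sigma2 tp rp Tc bb Rb Reve C rho be V ((1 - theta) * P) (theta * P))
              \<longlongrightarrow> ergodic_secrecy_rate_inf sigma2 tp rp Tc bb Rb Reve C rho be V theta) at_top
            \<and> ergodic_secrecy_rate_inf sigma2 tp rp Tc bb Rb Reve C rho be V theta < \<infinity>
            \<and> 0 < ergodic_secrecy_rate_inf sigma2 tp rp Tc bb Rb Reve C rho be V theta)
       \<and> ((\<exists>L. ((\<lambda>P. ergodic_secrecy_rate sigma2 tp rp Tc bb Rb Reve C rho be V ((1 - theta) * P) (theta * P))
              \<longlongrightarrow> L) at_top \<and> (L = 0 \<longleftrightarrow> theta = 0)))"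
proof -
  interpret wiretap Rb sigma2 tp rp bb Reve C V rho be
    by unfold_locales (use assms in auto)
  let ?R = "\<lambda>P. ergodic_secrecy_rate sigma2 tp rp Tc bb Rb Reve C rho be V ((1 - theta) * P) (theta * P)"
  let ?L = "ergodic_secrecy_rate_inf sigma2 tp rp Tc bb Rb Reve C rho be V theta"
  have zero: "(?R \<longlongrightarrow> 0) at_top" if "theta = 0"
    using ergodic_secrecy_rate_tendsto_0[OF assms(6)] that by simp
  have pos: "(?R \<longlongrightarrow> ?L) at_top \<and> ?L < \<infinity> \<and> 0 < ?L" if "0 < theta"
    using ergodic_secrecy_rate_tendsto_inf ergodic_secrecy_rate_inf_finite_pos assms(6,17) that by blast
  have "\<exists>L. (?R \<longlongrightarrow> L) at_top \<and> (L = 0 \<longleftrightarrow> theta = 0)"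
    using zero pos assms(16) by (cases "theta = 0") auto
  with zero pos show ?thesis by blast
qed

end
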